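(* Let $Q\subset\mathbb{R}^d$ be compact, $T>0$, and let $H:([0,T]\times Q)^2\to\mathbb{R}$ satisfy, for constants $\beta\ge1$, $\alpha,\gamma,c,C>0$, $$|H(t,x;s,y)|\le C(t-s)^{-\alpha}\exp\Big(-c\frac{|x-y|^\beta}{(t-s)^\gamma}\Big)\quad(0\le s<t\le T,\ x,y\in Q).$$ For $v\in L^\lambda([0,T],L^\rho(Q))$ and $0\le t_0\le t\le T$, $x\in Q$, set $J(v)(t_0,t,x)=\int_{t_0}^t\int_Q H(t,x;s,y)v(s,y)\,dy\,ds$. Fix $\rho\in[1,+\infty]$, $q\in[\rho,+\infty]$ and define $r$ by $\frac1r=\frac1q-\frac1\rho+1$. Then there is $C>0$ such that for $0\le t_0\le t\le T$, $$\|J(v)(t_0,t,\cdot)\|_{L^q(Q)}\le C\int_{t_0}^t(t-s)^{-\alpha+\frac{\gamma d}{\beta r}}\|v(s,\cdot)\|_{L^\rho(Q)}\,ds.$$ Consequently, given $\lambda\in[1,+\infty]$, if $\alpha+\frac1\lambda<\frac{\gamma d}{\beta r}+1$, then $v\mapsto J(v)(0,\cdot,\cdot)$ is a bounded operator from $L^\lambda([0,T],L^\rho(Q))$ into $L^\infty([0,T],L^q(Q))$. *)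

theory Defs
  imports "HOL-Analysis.Analysis"
begin

definition enn_powr :: "ennreal \<Rightarrow> real \<Rightarrow> ennreal" where
  "enn_powr x a = (if x = \<infinity> then \<infinity> else ennreal (enn2real x powr a))"

definition Lp_norm :: "'a measure \<Rightarrow> ennreal \<Rightarrow> ('a \<Rightarrow> ennreal) \<Rightarrow> ennreal" where
  "Lp_norm M p f =
     (if p = \<infinity> then Inf {C. AE x in M. f x \<le> C}
      else enn_powr (\<integral>\<^sup>+ x. enn_powr (f x) (enn2real p) \<partial>M) (1 / enn2real p))"

definition recip :: "ennreal \<Rightarrow> real" where
  "recip p = enn2real (inverse p)"

definition Jop :: "('a::euclidean_space) set \<Rightarrow> (real \<Rightarrow> 'a \<Rightarrow> real \<Rightarrow> 'a \<Rightarrow> real)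
                    \<Rightarrow> (real \<Rightarrow> 'a \<Rightarrow> real) \<Rightarrow> real \<Rightarrow> real \<Rightarrow> 'a \<Rightarrow> real" where
  "Jop Q H v t0 t x =
     (LINT s:{t0..t}|lborel. (LINT y:Q|lborel. H t x s y * v s y))"

end

theory Submission
  imports Defs "HOL-Probability.Distributions"
begin

text \<open>The estimate is a Young inequality for convolution in space with a kernel depending on time.
  The bound on \<open>H\<close> gives \<open>|J(v)(t0,t,x)| \<le> \<integral>\<^sub>t\<^sub>0\<^sup>t \<integral>\<^sub>Q \<kappa>(t-s, x-y) |v(s,y)| dy ds\<close> with
  \<open>\<kappa>(\<tau>, z) = C \<tau>^(-\<alpha>) exp (-c |z|^\<beta> / \<tau>^\<gamma>)\<close>, and the substitution \<open>z = \<tau>^(\<gamma>/\<beta>) w\<close> shows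
  \<open>\<parallel>\<kappa>(\<tau>, \<cdot>)\<parallel>\<^sub>r \<le> K \<tau>^(-\<alpha> + \<gamma>d/(\<beta>r))\<close>. Normalizing \<open>\<kappa>(t-s, \<cdot>)\<close> and \<open>v(s, \<cdot>)\<close> by their norms, a
  three-factor Hoelder inequality in \<open>(s, y)\<close> followed by Tonelli in \<open>x\<close> bounds the \<open>L\<^sup>q\<close> norm by
  \<open>\<integral> \<parallel>\<kappa>(t-s, \<cdot>)\<parallel>\<^sub>r \<parallel>v(s)\<parallel>\<^sub>\<rho> ds\<close>; this avoids Minkowski's integral inequality. The endpoint cases
  \<open>\<rho> = \<infinity>\<close> and \<open>r = \<infinity>\<close> are pointwise bounds. The second claim is Hoelder's inequality in time:
  \<open>(t-s)^e\<close> lies in \<open>L^\<lambda>'(0,t)\<close>, \<open>1/\<lambda> + 1/\<lambda>' = 1\<close>, uniformly in \<open>t \<le> T\<close> exactly when \<open>e > 1/\<lambda> - 1\<close>.\<close>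

section \<open>Real powers of extended nonnegative reals\<close>

lemma enn_powr_ennreal: "0 \<le> x \<Longrightarrow> enn_powr (ennreal x) a = ennreal (x powr a)"
  by (simp add: enn_powr_def)

lemma enn_powr_top [simp]: "enn_powr top a = top"
  by (simp add: enn_powr_def)

lemma enn_powr_0 [simp]: "enn_powr 0 a = 0"
  by (simp add: enn_powr_def)

lemma enn_powr_1 [simp]: "enn_powr x 1 = x"
  by (cases x) (auto simp: enn_powr_def)

lemma enn_powr_one_base [simp]: "enn_powr 1 a = 1"
  by (simp add: enn_powr_def)

lemma enn_powr_eq_0_iff: "enn_powr x a = 0 \<longleftrightarrow> x = 0"
  by (cases x) (auto simp: enn_powr_def)

lemma enn_powr_mono: "x \<le> y \<Longrightarrow> 0 \<le> a \<Longrightarrow> enn_powr x a \<le> enn_powr y a"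
  by (cases x; cases y) (auto simp: enn_powr_def top_unique intro!: ennreal_leI powr_mono2)

lemma enn_powr_mult: "0 < a \<Longrightarrow> enn_powr (x * y) a = enn_powr x a * enn_powr y a"
  by (cases x; cases y)
    (auto simp: enn_powr_def powr_mult ennreal_mult ennreal_mult_top ennreal_top_mult
      ennreal_mult_eq_top_iff simp flip: ennreal_mult)

lemma enn_powr_powr: "0 < a \<Longrightarrow> 0 < b \<Longrightarrow> enn_powr (enn_powr x a) b = enn_powr x (a * b)"
  by (cases x) (auto simp: enn_powr_def powr_powr)

lemma enn_powr_add: "0 < a \<Longrightarrow> 0 < b \<Longrightarrow> enn_powr x a * enn_powr x b = enn_powr x (a + b)"
  by (cases x) (auto simp: enn_powr_def powr_add ennreal_mult)

lemma measurable_enn_powr [measurable]: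
  assumes [measurable]: "f \<in> borel_measurable M"
  shows "(\<lambda>x. enn_powr (f x) a) \<in> borel_measurable M"
  unfolding enn_powr_def by measurable

(* enn_powr inherits 0 powr 0 = 0 from powr; with the convention x^0 = 1 the exponent laws below
   hold for all nonnegative exponents, as needed for Hoelder's inequality with a vanishing weight. *)
definition enn_rpow :: "ennreal \<Rightarrow> real \<Rightarrow> ennreal" where
  "enn_rpow x a = (if a = 0 then 1 else enn_powr x a)"

lemma enn_rpow_0 [simp]: "enn_rpow x 0 = 1"
  and enn_rpow_1 [simp]: "enn_rpow x 1 = x"
  and enn_rpow_one_base [simp]: "enn_rpow 1 a = 1"
  by (simp_all add: enn_rpow_def)

lemma enn_rpow_pos: "0 < a \<Longrightarrow> enn_rpow x a = enn_powr x a"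
  by (simp add: enn_rpow_def)

lemma enn_rpow_mono: "x \<le> y \<Longrightarrow> 0 \<le> a \<Longrightarrow> enn_rpow x a \<le> enn_rpow y a"
  by (simp add: enn_rpow_def enn_powr_mono)

lemma enn_rpow_mult: "0 \<le> a \<Longrightarrow> enn_rpow (x * y) a = enn_rpow x a * enn_rpow y a"
  by (cases "a = 0") (auto simp: enn_rpow_def enn_powr_mult)

lemma enn_rpow_rpow: "0 \<le> a \<Longrightarrow> 0 \<le> b \<Longrightarrow> enn_rpow (enn_rpow x a) b = enn_rpow x (a * b)"
  by (cases "a = 0"; cases "b = 0") (auto simp: enn_rpow_def enn_powr_powr)

lemma enn_rpow_add: "0 \<le> a \<Longrightarrow> 0 \<le> b \<Longrightarrow> enn_rpow x a * enn_rpow x b = enn_rpow x (a + b)"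
  by (cases "a = 0"; cases "b = 0") (auto simp: enn_rpow_def enn_powr_add)

lemma measurable_enn_rpow [measurable]:
  assumes [measurable]: "f \<in> borel_measurable M"
  shows "(\<lambda>x. enn_rpow (f x) a) \<in> borel_measurable M"
  unfolding enn_rpow_def by measurable

section \<open>Hoelder's inequality for nonnegative integrals\<close>

lemma Youngs_inequality_ennreal:
  fixes a b \<theta> :: real
  assumes "0 < \<theta>" "\<theta> < 1" "0 < a" "0 < b"
  shows "enn_powr x \<theta> * enn_powr y (1 - \<theta>)
     \<le> ennreal (a powr \<theta> * b powr (1 - \<theta>)) * (ennreal (\<theta> / a) * x + ennreal ((1 - \<theta>) / b) * y)"
proof (cases "x = 0 \<or> y = 0 \<or> x = \<infinity> \<or> y = \<infinity>")
  case True
  then show ?thesis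
    using assms by (auto simp: enn_powr_eq_0_iff ennreal_mult_eq_top_iff ennreal_mult_top)
next
  case False
  then obtain r s where rs: "x = ennreal r" "y = ennreal s" "0 < r" "0 < s"
    by (cases x; cases y) auto
  have "(r / a) powr \<theta> * (s / b) powr (1 - \<theta>) \<le> \<theta> * (r / a) + (1 - \<theta>) * (s / b)"
    using Youngs_inequality_0[of \<theta> "1 - \<theta>" "r / a" "s / b"] assms rs by auto
  then have "r powr \<theta> * s powr (1 - \<theta>) \<le> a powr \<theta> * b powr (1 - \<theta>) * (\<theta> / a * r + (1 - \<theta>) / b * s)"
    using assms rs by (auto simp: powr_divide field_simps mult_left_mono)
  then show ?thesis
    using assms rs
    by (simp add: enn_powr_ennreal ennreal_leI flip: ennreal_mult ennreal_plus)
qed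

lemma nn_integral_Holder:
  assumes [measurable]: "f \<in> borel_measurable M" "g \<in> borel_measurable M" and "0 < \<theta>" "\<theta> < 1"
  shows "(\<integral>\<^sup>+x. enn_powr (f x) \<theta> * enn_powr (g x) (1 - \<theta>) \<partial>M)
     \<le> enn_powr (\<integral>\<^sup>+x. f x \<partial>M) \<theta> * enn_powr (\<integral>\<^sup>+x. g x \<partial>M) (1 - \<theta>)"
proof -
  define A B where "A = (\<integral>\<^sup>+x. f x \<partial>M)" and "B = (\<integral>\<^sup>+x. g x \<partial>M)"
  consider "A = 0 \<or> B = 0" | "A \<noteq> 0" "B \<noteq> 0" "A = \<infinity> \<or> B = \<infinity>"
    | a b where "A = ennreal a" "B = ennreal b" "0 < a" "0 < b"
    by (cases A; cases B) (auto simp: less_le)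
  then show ?thesis
  proof cases
    case 1
    then have "AE x in M. f x = 0 \<or> g x = 0"
      by (auto simp: A_def B_def nn_integral_0_iff_AE elim: eventually_mono)
    then have "(\<integral>\<^sup>+x. enn_powr (f x) \<theta> * enn_powr (g x) (1 - \<theta>) \<partial>M) = 0"
      by (subst nn_integral_0_iff_AE) (auto elim: eventually_mono)
    then show ?thesis by simp
  next
    case 2
    then have "enn_powr A \<theta> * enn_powr B (1 - \<theta>) = \<infinity>"
      by (auto simp: enn_powr_eq_0_iff ennreal_mult_eq_top_iff)
    then show ?thesis by (simp add: A_def B_def)
  next
    case (3 a b)
    have "(\<integral>\<^sup>+x. enn_powr (f x) \<theta> * enn_powr (g x) (1 - \<theta>) \<partial>M)
        \<le> (\<integral>\<^sup>+x. ennreal (a powr \<theta> * b powr (1 - \<theta>)) * (ennreal (\<theta> / a) * f x + ennreal ((1 - \<theta>) / b) * g x) \<partial>M)"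
      using assms 3 by (intro nn_integral_mono Youngs_inequality_ennreal) auto
    also have "\<dots> = ennreal (a powr \<theta> * b powr (1 - \<theta>)) * (ennreal (\<theta> / a) * A + ennreal ((1 - \<theta>) / b) * B)"
      by (simp add: A_def B_def nn_integral_cmult nn_integral_add)
    also have "ennreal (\<theta> / a) * A + ennreal ((1 - \<theta>) / b) * B = 1"
      using assms 3 by (simp flip: ennreal_mult ennreal_plus)
    also have "ennreal (a powr \<theta> * b powr (1 - \<theta>)) * 1 = enn_powr A \<theta> * enn_powr B (1 - \<theta>)"
      using 3 by (simp add: enn_powr_ennreal ennreal_mult)
    finally show ?thesis by (simp add: A_def B_def)
  qed
qed

lemma nn_integral_Holder':
  assumes [measurable]: "f \<in> borel_measurable M" "g \<in> borel_measurable M" and "0 \<le> \<theta>" "\<theta> \<le> 1"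
  shows "(\<integral>\<^sup>+x. enn_rpow (f x) \<theta> * enn_rpow (g x) (1 - \<theta>) \<partial>M)
     \<le> enn_rpow (\<integral>\<^sup>+x. f x \<partial>M) \<theta> * enn_rpow (\<integral>\<^sup>+x. g x \<partial>M) (1 - \<theta>)"
  using assms nn_integral_Holder[of f M g \<theta>]
  by (cases "\<theta> = 0 \<or> \<theta> = 1") (auto simp: enn_rpow_def)

lemma nn_integral_Holder3:
  assumes [measurable]: "g1 \<in> borel_measurable M" "g2 \<in> borel_measurable M" "g3 \<in> borel_measurable M"
    and \<theta>: "0 \<le> \<theta>1" "0 \<le> \<theta>2" "0 \<le> \<theta>3" "\<theta>1 + \<theta>2 + \<theta>3 = 1"
  shows "(\<integral>\<^sup>+x. enn_rpow (g1 x) \<theta>1 * enn_rpow (g2 x) \<theta>2 * enn_rpow (g3 x) \<theta>3 \<partial>M)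
     \<le> enn_rpow (\<integral>\<^sup>+x. g1 x \<partial>M) \<theta>1 * enn_rpow (\<integral>\<^sup>+x. g2 x \<partial>M) \<theta>2 * enn_rpow (\<integral>\<^sup>+x. g3 x \<partial>M) \<theta>3"
proof (cases "\<theta>1 = 1")
  case True
  then have "\<theta>2 = 0" "\<theta>3 = 0" using \<theta> by auto
  with True show ?thesis by simp
next
  case False
  \<comment> \<open>Apply the two-function inequality to g1 and h = g2^a * g3^(1-a), then to h itself.\<close>
  define \<phi> a where "\<phi> = 1 - \<theta>1" and "a = \<theta>2 / \<phi>"
  have \<phi>: "0 < \<phi>" "\<theta>1 = 1 - \<phi>"
    using \<theta> False by (auto simp: \<phi>_def)
  have a: "0 \<le> a" "a \<le> 1" "\<theta>2 = a * \<phi>" "\<theta>3 = (1 - a) * \<phi>"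
    using \<theta> \<phi> by (auto simp: a_def field_simps)
  define h where "h x = enn_rpow (g2 x) a * enn_rpow (g3 x) (1 - a)" for x
  have [measurable]: "h \<in> borel_measurable M" unfolding h_def by measurable
  have "(\<integral>\<^sup>+x. enn_rpow (g1 x) \<theta>1 * enn_rpow (g2 x) \<theta>2 * enn_rpow (g3 x) \<theta>3 \<partial>M)
      = (\<integral>\<^sup>+x. enn_rpow (g1 x) \<theta>1 * enn_rpow (h x) \<phi> \<partial>M)"
    using a \<phi> by (simp add: h_def enn_rpow_mult enn_rpow_rpow mult.assoc mult.commute[of _ \<phi>])
  also have "\<dots> \<le> enn_rpow (\<integral>\<^sup>+x. g1 x \<partial>M) \<theta>1 * enn_rpow (\<integral>\<^sup>+x. h x \<partial>M) \<phi>"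
    using nn_integral_Holder'[of g1 M h \<theta>1] \<theta> \<phi> by simp
  also have "\<dots> \<le> enn_rpow (\<integral>\<^sup>+x. g1 x \<partial>M) \<theta>1
      * enn_rpow (enn_rpow (\<integral>\<^sup>+x. g2 x \<partial>M) a * enn_rpow (\<integral>\<^sup>+x. g3 x \<partial>M) (1 - a)) \<phi>"
    unfolding h_def using assms(2,3) a \<phi>
    by (intro mult_left_mono enn_rpow_mono nn_integral_Holder') auto
  also have "\<dots> = enn_rpow (\<integral>\<^sup>+x. g1 x \<partial>M) \<theta>1 * enn_rpow (\<integral>\<^sup>+x. g2 x \<partial>M) \<theta>2 * enn_rpow (\<integral>\<^sup>+x. g3 x \<partial>M) \<theta>3"
    using a \<phi> by (simp add: enn_rpow_mult enn_rpow_rpow mult.assoc mult.commute[of _ \<phi>])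
  finally show ?thesis .
qed

section \<open>The \<open>L\<^sup>p\<close> norm\<close>

lemma recip_top [simp]: "recip top = 0"
  by (simp add: recip_def)

lemma recip_1 [simp]: "recip 1 = 1"
  by (simp add: recip_def)

lemma recip_ennreal: "0 < p \<Longrightarrow> recip (ennreal p) = 1 / p"
  by (simp add: recip_def inverse_ennreal inverse_eq_divide)

lemma recip_nonneg: "0 \<le> recip p"
  by (simp add: recip_def)

lemma recip_le_1: "1 \<le> p \<Longrightarrow> recip p \<le> 1"
  by (cases p) (auto simp: recip_ennreal)

lemma recip_eq_0_iff: "1 \<le> p \<Longrightarrow> recip p = 0 \<longleftrightarrow> p = top"
  by (cases p) (auto simp: recip_ennreal)

lemma recip_eq_1_iff: "1 \<le> p \<Longrightarrow> recip p = 1 \<longleftrightarrow> p = 1"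
  by (cases p) (auto simp: recip_ennreal)

lemma recip_antimono: "1 \<le> p \<Longrightarrow> p \<le> q \<Longrightarrow> recip q \<le> recip p"
  by (cases p; cases q) (auto simp: recip_ennreal frac_le top_unique)

lemma Lp_norm_ennreal:
  "0 < p \<Longrightarrow> Lp_norm M (ennreal p) f = enn_powr (\<integral>\<^sup>+x. enn_powr (f x) p \<partial>M) (1 / p)"
  by (simp add: Lp_norm_def)

lemma Lp_norm_one: "Lp_norm M 1 f = (\<integral>\<^sup>+x. f x \<partial>M)"
  using Lp_norm_ennreal[of 1 M f] by simp

lemma Lp_norm_top_le: "AE x in M. f x \<le> C \<Longrightarrow> Lp_norm M top f \<le> C"
  by (simp add: Lp_norm_def Inf_lower)

lemma AE_le_Lp_norm_top: "AE x in M. f x \<le> Lp_norm M top f"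
proof -
  define A where "A = {C. AE x in M. f x \<le> C}"
  have "top \<in> A" by (simp add: A_def)
  then obtain u where u: "\<And>n. u n \<in> A" "u \<longlonglongrightarrow> Inf A"
    using Inf_as_limit[of A] by blast
  have "AE x in M. \<forall>n. f x \<le> u n"
    using u(1) by (simp add: A_def AE_all_countable)
  moreover have "Lp_norm M top f = Inf A"
    by (simp add: Lp_norm_def A_def)
  ultimately show ?thesis
    by (auto elim!: eventually_mono intro: LIMSEQ_le_const[OF u(2)])
qed

lemma Lp_norm_top_le_iff: "Lp_norm M top f \<le> C \<longleftrightarrow> (AE x in M. f x \<le> C)"
  using AE_le_Lp_norm_top[of f M] Lp_norm_top_le[of f C M]
  by (auto elim: eventually_mono)

lemma Lp_norm_mono:
  assumes "\<And>x. x \<in> space M \<Longrightarrow> f x \<le> g x"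
  shows "Lp_norm M p f \<le> Lp_norm M p g"
proof (cases "p = top")
  case True
  have "AE x in M. f x \<le> g x"
    using assms by (auto intro: AE_I2)
  then have "{C. AE x in M. g x \<le> C} \<subseteq> {C. AE x in M. f x \<le> C}"
    by (auto elim: eventually_elim2 intro: order.trans)
  then show ?thesis
    using True by (simp add: Lp_norm_def Inf_superset_mono)
qed (use assms in \<open>auto simp: Lp_norm_def intro!: enn_powr_mono nn_integral_mono\<close>)

lemma Lp_norm_le_interpolation:
  assumes q: "1 \<le> q" and [measurable]: "X \<in> borel_measurable M"
    and X: "(\<integral>\<^sup>+x. X x \<partial>M) \<le> N"
    and F: "\<And>x. x \<in> space M \<Longrightarrow> F x \<le> enn_rpow (X x) (recip q) * enn_rpow N (1 - recip q)"
  shows "Lp_norm M q F \<le> N"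
proof (cases q)
  case top
  then show ?thesis using F by (auto intro: Lp_norm_top_le AE_I2)
next
  case (real l)
  with q have l: "1 \<le> l" by simp
  have "enn_powr (F x) l \<le> X x * enn_rpow N (l - 1)" if "x \<in> space M" for x
  proof -
    have "enn_powr (F x) l \<le> enn_rpow (enn_rpow (X x) (1 / l) * enn_rpow N (1 - 1 / l)) l"
      using F[OF that] l real by (simp add: enn_rpow_pos recip_ennreal enn_powr_mono)
    also have "\<dots> = X x * enn_rpow N (l - 1)"
      using l by (simp add: enn_rpow_mult enn_rpow_rpow algebra_simps)
    finally show ?thesis .
  qed
  then have "(\<integral>\<^sup>+x. enn_powr (F x) l \<partial>M) \<le> (\<integral>\<^sup>+x. X x \<partial>M) * enn_rpow N (l - 1)"
    by (subst nn_integral_multc[symmetric]) (auto intro: nn_integral_mono)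
  also have "\<dots> \<le> enn_rpow N 1 * enn_rpow N (l - 1)"
    using X by (simp add: mult_right_mono)
  also have "\<dots> = enn_powr N l"
    using l enn_rpow_add[of 1 "l - 1" N] by (simp add: enn_rpow_pos)
  finally have "Lp_norm M q F \<le> enn_powr (enn_powr N l) (1 / l)"
    using l real by (simp add: Lp_norm_ennreal enn_powr_mono)
  also have "\<dots> = N"
    using l by (simp add: enn_powr_powr)
  finally show ?thesis .
qed

lemma nn_integral_mult_le_Lp_norm_top:
  assumes "g \<in> borel_measurable M"
  shows "(\<integral>\<^sup>+x. f x * g x \<partial>M) \<le> Lp_norm M top f * Lp_norm M 1 g"
proof -
  have "(\<integral>\<^sup>+x. f x * g x \<partial>M) \<le> (\<integral>\<^sup>+x. Lp_norm M top f * g x \<partial>M)"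
    using AE_le_Lp_norm_top[of f M] by (intro nn_integral_mono_AE) (auto elim!: eventually_mono intro: mult_right_mono)
  then show ?thesis
    using assms by (simp add: nn_integral_cmult Lp_norm_one)
qed

lemma nn_integral_mult_le_Lp_norm:
  assumes [measurable]: "f \<in> borel_measurable M" "g \<in> borel_measurable M"
    and p: "1 \<le> p" "1 \<le> p'" "recip p + recip p' = 1"
  shows "(\<integral>\<^sup>+x. f x * g x \<partial>M) \<le> Lp_norm M p f * Lp_norm M p' g"
proof (cases "p = top \<or> p' = top")
  case True
  then have "p = top \<and> p' = 1 \<or> p = 1 \<and> p' = top"
    using p by (auto simp: recip_eq_1_iff)
  then show ?thesis
    using nn_integral_mult_le_Lp_norm_top[of g M f] nn_integral_mult_le_Lp_norm_top[of f M g]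
    by (auto simp: mult.commute)
next
  case False
  then obtain l l' where l: "p = ennreal l" "p' = ennreal l'" "1 \<le> l" "1 \<le> l'"
    using p by (cases p; cases p') auto
  have sum: "1 / l + 1 / l' = 1"
    using p l by (simp add: recip_ennreal)
  have "0 < 1 / l'" "0 < 1 / l"
    using l by simp_all
  then have l': "1 / l' = 1 - 1 / l" "0 < 1 / l" "1 / l < 1"
    using sum by linarith+
  have "(\<integral>\<^sup>+x. f x * g x \<partial>M)
      = (\<integral>\<^sup>+x. enn_powr (enn_powr (f x) l) (1 / l) * enn_powr (enn_powr (g x) l') (1 - 1 / l) \<partial>M)"
    using l l' by (simp add: enn_powr_powr flip: l'(1))
  also have "\<dots> \<le> enn_powr (\<integral>\<^sup>+x. enn_powr (f x) l \<partial>M) (1 / l) * enn_powr (\<integral>\<^sup>+x. enn_powr (g x) l' \<partial>M) (1 - 1 / l)"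
    using l' by (intro nn_integral_Holder) auto
  also have "\<dots> = Lp_norm M p f * Lp_norm M p' g"
    using l by (simp add: Lp_norm_ennreal flip: l'(1))
  finally show ?thesis .
qed

lemma borel_measurable_Lp_norm:
  assumes "sigma_finite_measure N" and [measurable]: "case_prod f \<in> borel_measurable (M \<Otimes>\<^sub>M N)"
  shows "(\<lambda>x. Lp_norm N p (f x)) \<in> borel_measurable M"
proof -
  interpret N: sigma_finite_measure N by fact
  show ?thesis
  proof (cases "p = top")
    case True
    have "Lp_norm N p (f x) \<le> C \<longleftrightarrow> (\<integral>\<^sup>+y. (if C < f x y then 1 else 0) \<partial>N) = 0"
      if "x \<in> space M" for x C
      using that True by (subst nn_integral_0_iff_AE) (auto simp: Lp_norm_top_le_iff not_less)
    then have "{x \<in> space M. Lp_norm N p (f x) \<le> C}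
        = {x \<in> space M. (\<integral>\<^sup>+y. (if C < f x y then 1 else 0) \<partial>N) = 0}" for C
      by auto
    then show ?thesis
      by (intro borel_measurableI_le) simp
  next
    case False
    then show ?thesis by (simp add: Lp_norm_def)
  qed
qed

lemma Lp_norm_le_imp_nn_integral_powr_le:
  assumes "0 < m" "0 \<le> c" "Lp_norm M (ennreal m) g \<le> ennreal c"
  shows "(\<integral>\<^sup>+x. enn_powr (g x) m \<partial>M) \<le> ennreal (c powr m)"
proof -
  have "(\<integral>\<^sup>+x. enn_powr (g x) m \<partial>M) = enn_powr (Lp_norm M (ennreal m) g) m"
    using assms by (simp add: Lp_norm_ennreal enn_powr_powr)
  also have "\<dots> \<le> enn_powr (ennreal c) m"
    using assms by (intro enn_powr_mono) auto
  finally show ?thesis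
    using assms by (simp add: enn_powr_ennreal)
qed

lemma nn_integral_powr_normalized_le_1:
  assumes [measurable]: "g \<in> borel_measurable M"
    and "0 < m" "0 < c" "Lp_norm M (ennreal m) g \<le> ennreal c"
  shows "(\<integral>\<^sup>+x. enn_powr (g x * ennreal (1 / c)) m \<partial>M) \<le> 1"
proof -
  have "(\<integral>\<^sup>+x. enn_powr (g x * ennreal (1 / c)) m \<partial>M)
      = (\<integral>\<^sup>+x. enn_powr (g x) m \<partial>M) * ennreal ((1 / c) powr m)"
    using assms by (simp add: enn_powr_mult enn_powr_ennreal nn_integral_multc)
  also have "\<dots> \<le> ennreal (c powr m) * ennreal ((1 / c) powr m)"
    using assms by (intro mult_right_mono Lp_norm_le_imp_nn_integral_powr_le) auto
  also have "\<dots> = 1"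
    using assms by (simp add: powr_divide flip: ennreal_mult)
  finally show ?thesis .
qed

lemma AE_eq_0_if_Lp_norm_eq_0:
  assumes [measurable]: "g \<in> borel_measurable M" and "0 < m" "Lp_norm M (ennreal m) g = 0"
  shows "AE x in M. g x = 0"
proof -
  have "(\<integral>\<^sup>+x. enn_powr (g x) m \<partial>M) = 0"
    using assms by (simp add: Lp_norm_ennreal enn_powr_eq_0_iff)
  then show ?thesis
    by (subst (asm) nn_integral_0_iff_AE) (auto simp: enn_powr_eq_0_iff)
qed

section \<open>Young's inequality for integral operators\<close>

lemma borel_measurable_sections3:
  assumes k: "(\<lambda>(x, s, y). k x s y) \<in> borel_measurable (L \<Otimes>\<^sub>M M \<Otimes>\<^sub>M N)"
  shows borel_measurable_section3_yz: "x \<in> space L \<Longrightarrow> (\<lambda>(s, y). k x s y) \<in> borel_measurable (M \<Otimes>\<^sub>M N)"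
    and borel_measurable_section3_z: "x \<in> space L \<Longrightarrow> s \<in> space M \<Longrightarrow> (\<lambda>y. k x s y) \<in> borel_measurable N"
    and borel_measurable_section3_x: "s \<in> space M \<Longrightarrow> y \<in> space N \<Longrightarrow> (\<lambda>x. k x s y) \<in> borel_measurable L"
proof -
  show yz: "(\<lambda>(s, y). k x s y) \<in> borel_measurable (M \<Otimes>\<^sub>M N)" if "x \<in> space L" for x
    using measurable_Pair2[OF k that] by simp
  show "(\<lambda>y. k x s y) \<in> borel_measurable N" if "x \<in> space L" "s \<in> space M" for x s
    using measurable_Pair2[OF yz[OF that(1)] that(2)] by simp
  have k': "(\<lambda>z. k (fst z) (fst (snd z)) (snd (snd z))) \<in> borel_measurable (L \<Otimes>\<^sub>M M \<Otimes>\<^sub>M N)"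
    using k by (simp add: case_prod_beta')
  show "(\<lambda>x. k x s y) \<in> borel_measurable L" if "s \<in> space M" "y \<in> space N" for s y
    using measurable_compose[OF measurable_Pair2'[of "(s, y)" "M \<Otimes>\<^sub>M N" L] k'] that
    by (simp add: space_pair_measure)
qed

lemma nn_integral_pair_weighted_le:
  assumes "sigma_finite_measure N"
    and [measurable]: "(\<lambda>(s, y). g s y) \<in> borel_measurable (M \<Otimes>\<^sub>M N)" "W \<in> borel_measurable M"
    and g: "\<And>s. s \<in> space M \<Longrightarrow> (\<integral>\<^sup>+y. g s y \<partial>N) \<le> 1"
  shows "(\<integral>\<^sup>+z. W (fst z) * g (fst z) (snd z) \<partial>(M \<Otimes>\<^sub>M N)) \<le> (\<integral>\<^sup>+s. W s \<partial>M)"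
proof -
  interpret N: sigma_finite_measure N by fact
  have "(\<integral>\<^sup>+z. W (fst z) * g (fst z) (snd z) \<partial>(M \<Otimes>\<^sub>M N)) = (\<integral>\<^sup>+s. \<integral>\<^sup>+y. W s * g s y \<partial>N \<partial>M)"
    by (simp add: N.nn_integral_fst[symmetric])
  also have "\<dots> = (\<integral>\<^sup>+s. W s * (\<integral>\<^sup>+y. g s y \<partial>N) \<partial>M)"
    using measurable_Pair2[OF assms(2)] by (intro nn_integral_cong nn_integral_cmult) simp
  also have "\<dots> \<le> (\<integral>\<^sup>+s. W s \<partial>M)"
    using g by (intro nn_integral_mono) (simp add: mult_left_le)
  finally show ?thesis .
qed

lemma nn_integral_Tonelli_pair_weighted_le:
  assumes "sigma_finite_measure \<mu>" "sigma_finite_measure M" "sigma_finite_measure \<nu>"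
    and g_meas: "(\<lambda>(x, s, y). g x s y) \<in> borel_measurable (\<mu> \<Otimes>\<^sub>M M \<Otimes>\<^sub>M \<nu>)"
    and [measurable]: "(\<lambda>(s, y). h s y) \<in> borel_measurable (M \<Otimes>\<^sub>M \<nu>)" "W \<in> borel_measurable M"
    and g: "\<And>s y. s \<in> space M \<Longrightarrow> y \<in> space \<nu> \<Longrightarrow> (\<integral>\<^sup>+x. g x s y \<partial>\<mu>) \<le> 1"
    and h: "\<And>s. s \<in> space M \<Longrightarrow> (\<integral>\<^sup>+y. h s y \<partial>\<nu>) \<le> 1"
  shows "(\<integral>\<^sup>+x. (\<integral>\<^sup>+z. W (fst z) * g x (fst z) (snd z) * h (fst z) (snd z) \<partial>(M \<Otimes>\<^sub>M \<nu>)) \<partial>\<mu>)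
    \<le> (\<integral>\<^sup>+s. W s \<partial>M)"
proof -
  interpret P: pair_sigma_finite \<mu> "M \<Otimes>\<^sub>M \<nu>"
    unfolding pair_sigma_finite_def using assms(1-3) by (auto intro: sigma_finite_pair_measure)
  have [measurable]: "(\<lambda>z. g (fst z) (fst (snd z)) (snd (snd z))) \<in> borel_measurable (\<mu> \<Otimes>\<^sub>M M \<Otimes>\<^sub>M \<nu>)"
    using g_meas by (simp add: case_prod_beta')
  have "(\<integral>\<^sup>+x. (\<integral>\<^sup>+z. W (fst z) * g x (fst z) (snd z) * h (fst z) (snd z) \<partial>(M \<Otimes>\<^sub>M \<nu>)) \<partial>\<mu>)
      = (\<integral>\<^sup>+z. (\<integral>\<^sup>+x. W (fst z) * h (fst z) (snd z) * g x (fst z) (snd z) \<partial>\<mu>) \<partial>(M \<Otimes>\<^sub>M \<nu>))"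
    by (subst P.Fubini'[symmetric]) (simp_all add: mult_ac)
  also have "\<dots> = (\<integral>\<^sup>+z. W (fst z) * h (fst z) (snd z) * (\<integral>\<^sup>+x. g x (fst z) (snd z) \<partial>\<mu>) \<partial>(M \<Otimes>\<^sub>M \<nu>))"
    using borel_measurable_section3_x[OF g_meas]
    by (intro nn_integral_cong nn_integral_cmult) (auto simp: space_pair_measure)
  also have "\<dots> \<le> (\<integral>\<^sup>+z. W (fst z) * h (fst z) (snd z) \<partial>(M \<Otimes>\<^sub>M \<nu>))"
    using g by (intro nn_integral_mono) (auto simp: space_pair_measure mult_left_le)
  also have "\<dots> \<le> (\<integral>\<^sup>+s. W s \<partial>M)"
    using h by (rule nn_integral_pair_weighted_le[OF assms(3), rotated 2]) measurable
  finally show ?thesis .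
qed

lemma enn_rpow_factorization3:
  assumes "0 < r" "0 < p" "0 \<le> \<theta>1" "0 \<le> \<theta>2" "0 \<le> \<theta>3" "\<theta>1 + \<theta>2 + \<theta>3 = 1"
    and "r * (\<theta>1 + \<theta>2) = 1" "p * (\<theta>1 + \<theta>3) = 1"
  shows "W * (k * w) = enn_rpow (W * enn_powr k r * enn_powr w p) \<theta>1
    * enn_rpow (W * enn_powr k r) \<theta>2 * enn_rpow (W * enn_powr w p) \<theta>3"
proof -
  have "enn_rpow (W * enn_powr k r * enn_powr w p) \<theta>1 * enn_rpow (W * enn_powr k r) \<theta>2
      * enn_rpow (W * enn_powr w p) \<theta>3
    = (enn_rpow W \<theta>1 * enn_rpow W \<theta>2 * enn_rpow W \<theta>3) * (enn_rpow k (r * \<theta>1) * enn_rpow k (r * \<theta>2))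
      * (enn_rpow w (p * \<theta>1) * enn_rpow w (p * \<theta>3))"
    using assms by (simp add: enn_rpow_mult enn_rpow_rpow mult_ac flip: enn_rpow_pos)
  also have "\<dots> = enn_rpow W (\<theta>1 + \<theta>2 + \<theta>3) * enn_rpow k (r * (\<theta>1 + \<theta>2)) * enn_rpow w (p * (\<theta>1 + \<theta>3))"
    using assms by (simp add: enn_rpow_add distrib_left)
  finally show ?thesis
    using assms by (simp add: mult_ac)
qed

text \<open>With \<open>G1 = W k^r w^p\<close>, \<open>G2 = W k^r\<close>, \<open>G3 = W w^p\<close> one has
  \<open>W k w = G1^(1/q) G2^(1 - 1/p) G3^(1/p - 1/q)\<close>; Hoelder in \<open>(s, y)\<close> bounds the operator by
  \<open>X^(1/q) N^(1 - 1/q)\<close> with \<open>X(x) = \<integral> G1\<close> and \<open>N = \<integral> W\<close>, and Tonelli gives \<open>\<integral> X \<le> N\<close>.\<close>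

lemma Young_integral_operator_normalized:
  fixes k :: "'x \<Rightarrow> 's \<Rightarrow> 'y \<Rightarrow> ennreal" and w :: "'s \<Rightarrow> 'y \<Rightarrow> ennreal" and W :: "'s \<Rightarrow> ennreal"
    and p r :: real and q :: ennreal
  assumes "sigma_finite_measure \<mu>" "sigma_finite_measure M" "sigma_finite_measure \<nu>"
    and k_meas: "(\<lambda>(x, s, y). k x s y) \<in> borel_measurable (\<mu> \<Otimes>\<^sub>M M \<Otimes>\<^sub>M \<nu>)"
    and [measurable]: "(\<lambda>(s, y). w s y) \<in> borel_measurable (M \<Otimes>\<^sub>M \<nu>)" "W \<in> borel_measurable M"
    and exps: "1 \<le> p" "ennreal p \<le> q" "0 < r" "1 / r = recip q - 1 / p + 1"
    and k_y: "\<And>x s. x \<in> space \<mu> \<Longrightarrow> s \<in> space M \<Longrightarrow> (\<integral>\<^sup>+y. enn_powr (k x s y) r \<partial>\<nu>) \<le> 1"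
    and k_x: "\<And>s y. s \<in> space M \<Longrightarrow> y \<in> space \<nu> \<Longrightarrow> (\<integral>\<^sup>+x. enn_powr (k x s y) r \<partial>\<mu>) \<le> 1"
    and w: "\<And>s. s \<in> space M \<Longrightarrow> (\<integral>\<^sup>+y. enn_powr (w s y) p \<partial>\<nu>) \<le> 1"
  shows "Lp_norm \<mu> q (\<lambda>x. \<integral>\<^sup>+s. W s * (\<integral>\<^sup>+y. k x s y * w s y \<partial>\<nu>) \<partial>M) \<le> (\<integral>\<^sup>+s. W s \<partial>M)"
proof -
  interpret \<nu>: sigma_finite_measure \<nu> by fact
  interpret M\<nu>: sigma_finite_measure "M \<Otimes>\<^sub>M \<nu>"
    using assms(2,3) by (rule sigma_finite_pair_measure)
  have [measurable]: "(\<lambda>z. k (fst z) (fst (snd z)) (snd (snd z))) \<in> borel_measurable (\<mu> \<Otimes>\<^sub>M M \<Otimes>\<^sub>M \<nu>)"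
    using k_meas by (simp add: case_prod_beta')
  note k_sections [measurable] = borel_measurable_sections3[OF k_meas]
  define \<theta>1 \<theta>2 \<theta>3 where "\<theta>1 = recip q" and "\<theta>2 = 1 - 1 / p" and "\<theta>3 = 1 / p - recip q"
  have "recip q \<le> 1 / p"
    using recip_antimono[of "ennreal p" q] exps by (simp add: recip_ennreal)
  then have \<theta>: "0 \<le> \<theta>1" "0 \<le> \<theta>2" "0 \<le> \<theta>3" "\<theta>1 + \<theta>2 + \<theta>3 = 1"
      "r * (\<theta>1 + \<theta>2) = 1" "p * (\<theta>1 + \<theta>3) = 1"
    using exps by (auto simp: \<theta>1_def \<theta>2_def \<theta>3_def recip_nonneg field_simps)
  define N where "N = (\<integral>\<^sup>+s. W s \<partial>M)"
  define G1 where "G1 x z = W (fst z) * enn_powr (k x (fst z) (snd z)) r * enn_powr (w (fst z) (snd z)) p" for x z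
  define G2 where "G2 x z = W (fst z) * enn_powr (k x (fst z) (snd z)) r" for x z
  define G3 where "G3 z = W (fst z) * enn_powr (w (fst z) (snd z)) p" for z
  have [measurable]: "case_prod G1 \<in> borel_measurable (\<mu> \<Otimes>\<^sub>M M \<Otimes>\<^sub>M \<nu>)" "G3 \<in> borel_measurable (M \<Otimes>\<^sub>M \<nu>)"
    "x \<in> space \<mu> \<Longrightarrow> G1 x \<in> borel_measurable (M \<Otimes>\<^sub>M \<nu>)"
    "x \<in> space \<mu> \<Longrightarrow> G2 x \<in> borel_measurable (M \<Otimes>\<^sub>M \<nu>)" for x
    unfolding G1_def G2_def G3_def by measurable
  have Holder: "(\<integral>\<^sup>+s. W s * (\<integral>\<^sup>+y. k x s y * w s y \<partial>\<nu>) \<partial>M)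
      \<le> enn_rpow (\<integral>\<^sup>+z. G1 x z \<partial>(M \<Otimes>\<^sub>M \<nu>)) \<theta>1
        * (enn_rpow (\<integral>\<^sup>+z. G2 x z \<partial>(M \<Otimes>\<^sub>M \<nu>)) \<theta>2 * enn_rpow (\<integral>\<^sup>+z. G3 z \<partial>(M \<Otimes>\<^sub>M \<nu>)) \<theta>3)"
    if x: "x \<in> space \<mu>" for x
  proof -
    have "(\<integral>\<^sup>+s. W s * (\<integral>\<^sup>+y. k x s y * w s y \<partial>\<nu>) \<partial>M) = (\<integral>\<^sup>+s. \<integral>\<^sup>+y. W s * (k x s y * w s y) \<partial>\<nu> \<partial>M)"
      using x measurable_Pair2[of "\<lambda>(s, y). w s y" M \<nu>]
      by (intro nn_integral_cong nn_integral_cmult[symmetric]) measurable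
    also have "\<dots> = (\<integral>\<^sup>+z. enn_rpow (G1 x z) \<theta>1 * enn_rpow (G2 x z) \<theta>2 * enn_rpow (G3 z) \<theta>3 \<partial>(M \<Otimes>\<^sub>M \<nu>))"
      using x \<theta> exps
      by (simp add: \<nu>.nn_integral_fst[symmetric] G1_def G2_def G3_def enn_rpow_factorization3[of r p])
    also have "\<dots> \<le> enn_rpow (\<integral>\<^sup>+z. G1 x z \<partial>(M \<Otimes>\<^sub>M \<nu>)) \<theta>1 * enn_rpow (\<integral>\<^sup>+z. G2 x z \<partial>(M \<Otimes>\<^sub>M \<nu>)) \<theta>2
        * enn_rpow (\<integral>\<^sup>+z. G3 z \<partial>(M \<Otimes>\<^sub>M \<nu>)) \<theta>3"
      using x \<theta> by (intro nn_integral_Holder3) auto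
    finally show ?thesis
      by (simp add: mult.assoc)
  qed
  have G2: "(\<integral>\<^sup>+z. G2 x z \<partial>(M \<Otimes>\<^sub>M \<nu>)) \<le> N" if x: "x \<in> space \<mu>" for x
  proof -
    have "(\<lambda>(s, y). enn_powr (k x s y) r) \<in> borel_measurable (M \<Otimes>\<^sub>M \<nu>)"
      using x by measurable
    then show ?thesis
      unfolding G2_def N_def using k_y[OF x] by (intro nn_integral_pair_weighted_le[OF assms(3)]) auto
  qed
  have G3: "(\<integral>\<^sup>+z. G3 z \<partial>(M \<Otimes>\<^sub>M \<nu>)) \<le> N"
    unfolding G3_def N_def using w by (intro nn_integral_pair_weighted_le[OF assms(3)]) auto
  have G1: "(\<integral>\<^sup>+x. (\<integral>\<^sup>+z. G1 x z \<partial>(M \<Otimes>\<^sub>M \<nu>)) \<partial>\<mu>) \<le> N"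
    unfolding G1_def N_def using assms(1-3) k_x w
    by (intro nn_integral_Tonelli_pair_weighted_le) measurable
  have "\<theta>2 + \<theta>3 = 1 - recip q"
    using \<theta>(4) unfolding \<theta>1_def by linarith
  show ?thesis
    unfolding N_def[symmetric]
  proof (rule Lp_norm_le_interpolation[OF _ _ G1])
    fix x assume x: "x \<in> space \<mu>"
    have "enn_rpow (\<integral>\<^sup>+z. G2 x z \<partial>(M \<Otimes>\<^sub>M \<nu>)) \<theta>2 * enn_rpow (\<integral>\<^sup>+z. G3 z \<partial>(M \<Otimes>\<^sub>M \<nu>)) \<theta>3
        \<le> enn_rpow N \<theta>2 * enn_rpow N \<theta>3"
      using G2[OF x] G3 \<theta> by (intro mult_mono enn_rpow_mono) auto
    also have "\<dots> = enn_rpow N (1 - recip q)"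
      using \<theta> enn_rpow_add[of \<theta>2 \<theta>3 N] \<open>\<theta>2 + \<theta>3 = 1 - recip q\<close> by simp
    finally show "(\<integral>\<^sup>+s. W s * (\<integral>\<^sup>+y. k x s y * w s y \<partial>\<nu>) \<partial>M)
        \<le> enn_rpow (\<integral>\<^sup>+z. G1 x z \<partial>(M \<Otimes>\<^sub>M \<nu>)) (recip q) * enn_rpow N (1 - recip q)"
      using order.trans[OF Holder[OF x] mult_left_mono] by (simp add: \<theta>1_def)
  qed (use exps in \<open>auto intro: order.trans[of 1 "ennreal p"]\<close>)
qed

lemma nn_integral_powr_normalized_Lp_norm_le_1:
  assumes [measurable]: "g \<in> borel_measurable M" and "0 < p"
  shows "(\<integral>\<^sup>+x. enn_powr (g x * ennreal (1 / enn2real (Lp_norm M (ennreal p) g))) p \<partial>M) \<le> 1"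
proof (cases "0 < Lp_norm M (ennreal p) g \<and> Lp_norm M (ennreal p) g < \<infinity>")
  case True
  then show ?thesis
    using assms by (intro nn_integral_powr_normalized_le_1)
      (auto simp: enn2real_positive_iff ennreal_enn2real_if less_top)
next
  case False
  then have "enn2real (Lp_norm M (ennreal p) g) = 0"
    by (auto simp: enn2real_eq_0_iff less_top)
  then show ?thesis
    using assms by simp
qed

lemma ennreal_mult_normalized:
  assumes "0 < c" "0 < d"
  shows "ennreal c * ennreal d * (x * ennreal (1 / c) * (y * ennreal (1 / d))) = x * y"
proof -
  have "ennreal c * ennreal d * (x * ennreal (1 / c) * (y * ennreal (1 / d)))
      = (ennreal c * ennreal (1 / c)) * (ennreal d * ennreal (1 / d)) * (x * y)"
    by (simp only: ac_simps)
  then show ?thesis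
    using assms by (simp flip: ennreal_mult)
qed

lemma nn_integral_mult_le_normalized:
  assumes [measurable]: "\<kappa> \<in> borel_measurable M" "f \<in> borel_measurable M"
    and "0 < a" "0 < p" "Lp_norm M (ennreal p) f \<noteq> \<infinity>"
  shows "(\<integral>\<^sup>+y. \<kappa> y * f y \<partial>M) \<le> ennreal a * Lp_norm M (ennreal p) f
    * (\<integral>\<^sup>+y. \<kappa> y * ennreal (1 / a) * (f y * ennreal (1 / enn2real (Lp_norm M (ennreal p) f))) \<partial>M)"
proof (cases "Lp_norm M (ennreal p) f = 0")
  case True
  then have "AE y in M. f y = 0"
    using assms by (intro AE_eq_0_if_Lp_norm_eq_0) auto
  then have "(\<integral>\<^sup>+y. \<kappa> y * f y \<partial>M) = 0"
    by (subst nn_integral_0_iff_AE) (auto elim!: eventually_mono)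
  then show ?thesis by simp
next
  case False
  then obtain \<beta> where \<beta>: "Lp_norm M (ennreal p) f = ennreal \<beta>" "0 < \<beta>"
    using assms by (cases "Lp_norm M (ennreal p) f") auto
  then have "(\<integral>\<^sup>+y. \<kappa> y * f y \<partial>M)
      = (\<integral>\<^sup>+y. ennreal a * ennreal \<beta> * (\<kappa> y * ennreal (1 / a) * (f y * ennreal (1 / \<beta>))) \<partial>M)"
    using assms by (simp add: ennreal_mult_normalized)
  also have "\<dots> = ennreal a * ennreal \<beta> * (\<integral>\<^sup>+y. \<kappa> y * ennreal (1 / a) * (f y * ennreal (1 / \<beta>)) \<partial>M)"
    by (rule nn_integral_cmult) measurable
  finally show ?thesis
    using \<beta> by simp
qed

lemma Young_integral_operator_finite:
  fixes \<kappa> :: "'x \<Rightarrow> 's \<Rightarrow> 'y \<Rightarrow> ennreal" and f :: "'s \<Rightarrow> 'y \<Rightarrow> ennreal" and a :: "'s \<Rightarrow> real"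
    and p r :: real and q :: ennreal
  assumes \<sigma>: "sigma_finite_measure \<mu>" "sigma_finite_measure M" "sigma_finite_measure \<nu>"
    and \<kappa>_meas: "(\<lambda>(x, s, y). \<kappa> x s y) \<in> borel_measurable (\<mu> \<Otimes>\<^sub>M M \<Otimes>\<^sub>M \<nu>)"
    and f_meas [measurable]: "(\<lambda>(s, y). f s y) \<in> borel_measurable (M \<Otimes>\<^sub>M \<nu>)"
    and [measurable]: "a \<in> borel_measurable M"
    and a_pos: "\<And>s. s \<in> space M \<Longrightarrow> 0 < a s"
    and exps: "1 \<le> p" "ennreal p \<le> q" "0 < r" "1 / r = recip q - 1 / p + 1"
    and \<kappa>_y: "\<And>x s. x \<in> space \<mu> \<Longrightarrow> s \<in> space M \<Longrightarrow> Lp_norm \<nu> (ennreal r) (\<kappa> x s) \<le> ennreal (a s)"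
    and \<kappa>_x: "\<And>s y. s \<in> space M \<Longrightarrow> y \<in> space \<nu> \<Longrightarrow> Lp_norm \<mu> (ennreal r) (\<lambda>x. \<kappa> x s y) \<le> ennreal (a s)"
  shows "Lp_norm \<mu> q (\<lambda>x. \<integral>\<^sup>+s. \<integral>\<^sup>+y. \<kappa> x s y * f s y \<partial>\<nu> \<partial>M)
    \<le> (\<integral>\<^sup>+s. ennreal (a s) * Lp_norm \<nu> (ennreal p) (f s) \<partial>M)"
proof -
  have [measurable]: "(\<lambda>z. \<kappa> (fst z) (fst (snd z)) (snd (snd z))) \<in> borel_measurable (\<mu> \<Otimes>\<^sub>M M \<Otimes>\<^sub>M \<nu>)"
    using \<kappa>_meas by (simp add: case_prod_beta')
  have f_section: "(\<lambda>y. f s y) \<in> borel_measurable \<nu>" if "s \<in> space M" for s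
    using measurable_Pair2[OF f_meas that] by simp
  define b where "b s = Lp_norm \<nu> (ennreal p) (f s)" for s
  have [measurable]: "b \<in> borel_measurable M"
    unfolding b_def by (rule borel_measurable_Lp_norm[OF \<sigma>(3) f_meas])
  define N where "N = (\<integral>\<^sup>+s. ennreal (a s) * b s \<partial>M)"
  show ?thesis
  proof (cases "N = \<infinity>")
    case True
    then show ?thesis by (simp add: N_def b_def)
  next
    case False
    have "AE s in M. ennreal (a s) * b s \<noteq> \<infinity>"
      using False by (intro nn_integral_PInf_AE) (auto simp: N_def)
    then have b_finite: "AE s in M. b s \<noteq> \<infinity>"
      using AE_space by eventually_elim (auto simp: ennreal_mult_eq_top_iff dest: a_pos)
    \<comment> \<open>When \<open>b s \<in> {0, \<infinity>}\<close>, \<open>enn2real (b s) = 0\<close> and the normalized \<open>w s\<close> vanishes.\<close>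
    define k where "k x s y = \<kappa> x s y * ennreal (1 / a s)" for x s y
    define w where "w s y = f s y * ennreal (1 / enn2real (b s))" for s y
    have normalized: "Lp_norm \<mu> q (\<lambda>x. \<integral>\<^sup>+s. ennreal (a s) * b s * (\<integral>\<^sup>+y. k x s y * w s y \<partial>\<nu>) \<partial>M) \<le> N"
      unfolding N_def
    proof (rule Young_integral_operator_normalized[OF \<sigma> _ _ _ exps])
      show "(\<lambda>(x, s, y). k x s y) \<in> borel_measurable (\<mu> \<Otimes>\<^sub>M M \<Otimes>\<^sub>M \<nu>)"
        unfolding k_def by measurable
      show "(\<lambda>(s, y). w s y) \<in> borel_measurable (M \<Otimes>\<^sub>M \<nu>)"
        unfolding w_def by measurable
      show "(\<integral>\<^sup>+y. enn_powr (k x s y) r \<partial>\<nu>) \<le> 1" if "x \<in> space \<mu>" "s \<in> space M" for x s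
        unfolding k_def using that a_pos exps
        by (intro nn_integral_powr_normalized_le_1 \<kappa>_y borel_measurable_section3_z[OF \<kappa>_meas]) auto
      show "(\<integral>\<^sup>+x. enn_powr (k x s y) r \<partial>\<mu>) \<le> 1" if "s \<in> space M" "y \<in> space \<nu>" for s y
        unfolding k_def using that a_pos exps
        by (intro nn_integral_powr_normalized_le_1 \<kappa>_x borel_measurable_section3_x[OF \<kappa>_meas]) auto
      show "(\<integral>\<^sup>+y. enn_powr (w s y) p \<partial>\<nu>) \<le> 1" if "s \<in> space M" for s
        unfolding w_def b_def using that exps by (intro nn_integral_powr_normalized_Lp_norm_le_1 f_section) auto
    qed simp
    have pointwise: "(\<integral>\<^sup>+s. \<integral>\<^sup>+y. \<kappa> x s y * f s y \<partial>\<nu> \<partial>M)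
        \<le> (\<integral>\<^sup>+s. ennreal (a s) * b s * (\<integral>\<^sup>+y. k x s y * w s y \<partial>\<nu>) \<partial>M)" if "x \<in> space \<mu>" for x
    proof (rule nn_integral_mono_AE)
      show "AE s in M. (\<integral>\<^sup>+y. \<kappa> x s y * f s y \<partial>\<nu>) \<le> ennreal (a s) * b s * (\<integral>\<^sup>+y. k x s y * w s y \<partial>\<nu>)"
        using b_finite AE_space
      proof eventually_elim
        case (elim s)
        then show ?case
          unfolding k_def w_def b_def using that a_pos exps
          by (intro nn_integral_mult_le_normalized borel_measurable_section3_z[OF \<kappa>_meas] f_section) (auto simp: b_def)
      qed
    qed
    show ?thesis
      using order.trans[OF Lp_norm_mono[OF pointwise] normalized] unfolding N_def b_def .
  qed
qed

lemma Young_integral_operator: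
  fixes \<kappa> :: "'x \<Rightarrow> 's \<Rightarrow> 'y \<Rightarrow> ennreal" and f :: "'s \<Rightarrow> 'y \<Rightarrow> ennreal" and a :: "'s \<Rightarrow> real"
    and p q r :: ennreal
  assumes \<sigma>: "sigma_finite_measure \<mu>" "sigma_finite_measure M" "sigma_finite_measure \<nu>"
    and \<kappa>_meas: "(\<lambda>(x, s, y). \<kappa> x s y) \<in> borel_measurable (\<mu> \<Otimes>\<^sub>M M \<Otimes>\<^sub>M \<nu>)"
    and f_meas [measurable]: "(\<lambda>(s, y). f s y) \<in> borel_measurable (M \<Otimes>\<^sub>M \<nu>)"
    and a_meas: "a \<in> borel_measurable M"
    and a_pos: "\<And>s. s \<in> space M \<Longrightarrow> 0 < a s"
    and exps: "1 \<le> p" "p \<le> q" "1 \<le> r" "recip r = recip q - recip p + 1"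
    and \<kappa>_y: "\<And>x s. x \<in> space \<mu> \<Longrightarrow> s \<in> space M \<Longrightarrow> Lp_norm \<nu> r (\<kappa> x s) \<le> ennreal (a s)"
    and \<kappa>_x: "\<And>s y. s \<in> space M \<Longrightarrow> y \<in> space \<nu> \<Longrightarrow> Lp_norm \<mu> r (\<lambda>x. \<kappa> x s y) \<le> ennreal (a s)"
  shows "Lp_norm \<mu> q (\<lambda>x. \<integral>\<^sup>+s. \<integral>\<^sup>+y. \<kappa> x s y * f s y \<partial>\<nu> \<partial>M)
    \<le> (\<integral>\<^sup>+s. ennreal (a s) * Lp_norm \<nu> p (f s) \<partial>M)"
proof -
  \<comment> \<open>If \<open>q = \<infinity>\<close> and one of \<open>p\<close>, \<open>r\<close> is \<open>\<infinity>\<close>, the estimate is pointwise, by Hoelder's inequality in \<open>y\<close>.\<close>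
  have sup_norm_case: "Lp_norm \<mu> top (\<lambda>x. \<integral>\<^sup>+s. \<integral>\<^sup>+y. \<kappa> x s y * f s y \<partial>\<nu> \<partial>M)
      \<le> (\<integral>\<^sup>+s. ennreal (a s) * Lp_norm \<nu> p (f s) \<partial>M)"
    if "recip r' + recip p = 1" "1 \<le> r'" "\<And>x s. x \<in> space \<mu> \<Longrightarrow> s \<in> space M \<Longrightarrow> Lp_norm \<nu> r' (\<kappa> x s) \<le> ennreal (a s)"
    for r'
  proof (intro Lp_norm_top_le AE_I2 nn_integral_mono)
    fix x s assume x: "x \<in> space \<mu>" and s: "s \<in> space M"
    have "(\<integral>\<^sup>+y. \<kappa> x s y * f s y \<partial>\<nu>) \<le> Lp_norm \<nu> r' (\<kappa> x s) * Lp_norm \<nu> p (f s)"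
      using that exps x s measurable_Pair2[OF f_meas s]
      by (intro nn_integral_mult_le_Lp_norm borel_measurable_section3_z[OF \<kappa>_meas]) auto
    also have "\<dots> \<le> ennreal (a s) * Lp_norm \<nu> p (f s)"
      using that(3)[OF x s] by (rule mult_right_mono) simp
    finally show "(\<integral>\<^sup>+y. \<kappa> x s y * f s y \<partial>\<nu>) \<le> ennreal (a s) * Lp_norm \<nu> p (f s)" .
  qed
  have "recip q \<le> recip p" "recip p \<le> 1"
    using exps by (auto intro: recip_antimono recip_le_1)
  then consider (p_top) "p = top" | (r_top) "r = top" | (finite) l m where "p = ennreal l" "r = ennreal m"
    by (cases p; cases r) auto
  then show ?thesis
  proof cases
    case p_top
    then have "q = top" "r = 1"
      using exps by (auto simp: top_unique recip_eq_1_iff)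
    then show ?thesis
      using sup_norm_case[of 1] p_top \<kappa>_y by simp
  next
    case r_top
    then have "recip q = 0" "recip p = 1"
      using exps \<open>recip q \<le> recip p\<close> \<open>recip p \<le> 1\<close> recip_nonneg[of q] by auto
    then have "q = top" "p = 1"
      using exps by (auto simp: recip_eq_0_iff recip_eq_1_iff order.trans[of 1 p q])
    then show ?thesis
      using sup_norm_case[of top] r_top \<kappa>_y by simp
  next
    case finite
    then have "1 \<le> l" "0 < m" "1 / m = recip q - 1 / l + 1"
      using exps by (auto simp: recip_ennreal)
    then show ?thesis
      unfolding finite(1) using finite exps \<kappa>_y \<kappa>_x
      by (intro Young_integral_operator_finite[OF \<sigma> \<kappa>_meas f_meas a_meas a_pos]) auto
  qed
qed

section \<open>The stretched exponential kernel\<close>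

lemma nn_integral_exp_abs_finite:
  fixes k :: real assumes k: "0 < k"
  shows "(\<integral>\<^sup>+x. ennreal (exp (- k * \<bar>x\<bar>)) \<partial>lborel) < \<infinity>"
proof -
  define f where "f x = ennreal (exp (- x)) * indicator {0..} x" for x :: real
  have fm[measurable]: "f \<in> borel_measurable borel" unfolding f_def by measurable
  have f1: "(\<integral>\<^sup>+x. f x \<partial>lborel) = 1"
    using nn_intergal_power_times_exp_Ici[of 0] by (simp add: f_def)
  have f2: "(\<integral>\<^sup>+x. f (- x) \<partial>lborel) = 1"
    using nn_integral_real_affine[OF fm, of "-1" 0] f1 by simp
  have "(\<integral>\<^sup>+x. ennreal (exp (- \<bar>x\<bar>)) \<partial>lborel) \<le> (\<integral>\<^sup>+x. f x + f (- x) \<partial>lborel)"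
    by (intro nn_integral_mono) (auto simp: f_def indicator_def)
  also have "\<dots> = 2" by (simp add: nn_integral_add f1 f2)
  finally have le2: "(\<integral>\<^sup>+x. ennreal (exp (- \<bar>x\<bar>)) \<partial>lborel) \<le> 2" .
  have gm: "(\<lambda>x::real. ennreal (exp (- \<bar>x\<bar>))) \<in> borel_measurable borel" by measurable
  have "(\<integral>\<^sup>+x. ennreal (exp (- \<bar>x\<bar>)) \<partial>lborel) = ennreal k * (\<integral>\<^sup>+x. ennreal (exp (- \<bar>0 + k * x\<bar>)) \<partial>lborel)"
    using nn_integral_real_affine[OF gm, of k 0] k by simp
  also have "(\<lambda>x. ennreal (exp (- \<bar>0 + k * x\<bar>))) = (\<lambda>x. ennreal (exp (- k * \<bar>x\<bar>)))"
    using k by (auto simp: abs_mult)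
  finally have le: "ennreal k * (\<integral>\<^sup>+x. ennreal (exp (- k * \<bar>x\<bar>)) \<partial>lborel) \<le> 2"
    using le2 by simp
  show ?thesis
  proof (rule ccontr)
    assume "\<not> ?thesis"
    then have "ennreal k * (\<integral>\<^sup>+x. ennreal (exp (- k * \<bar>x\<bar>)) \<partial>lborel) = \<infinity>"
      using k by (simp add: less_top[symmetric] ennreal_mult_top)
    with le show False
      by (simp add: top_unique)
  qed
qed

lemma exp_neg_norm_powr_le_prod:
  fixes w :: "'a::euclidean_space"
  assumes a: "0 < a" and \<beta>: "1 \<le> \<beta>"
  shows "exp (- a * norm w powr \<beta>) \<le> exp a * (\<Prod>b\<in>Basis. exp (- (a / DIM('a)) * \<bar>w \<bullet> b\<bar>))"
proof -
  define S where "S = (\<Sum>b\<in>Basis. \<bar>w \<bullet> b\<bar>)"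
  have "S \<le> DIM('a) * norm w"
    using sum_bounded_above[of "Basis::'a set" "\<lambda>b. \<bar>w \<bullet> b\<bar>" "norm w"] Basis_le_norm[of _ w]
    by (simp add: S_def)
  then have "a / DIM('a) * S \<le> a * norm w"
    using a by (simp add: field_simps)
  moreover have "norm w - 1 \<le> norm w powr \<beta>"
    by (cases "1 \<le> norm w")
      (use powr_mono[OF \<beta>, of "norm w"] in simp, use powr_ge_zero[of "norm w" \<beta>] in linarith)
  then have "a * (norm w - 1) \<le> a * norm w powr \<beta>"
    using a by (intro mult_left_mono) auto
  ultimately have "- a * norm w powr \<beta> \<le> a - a / DIM('a) * S"
    by (simp add: algebra_simps)
  also have "\<dots> = a + (\<Sum>b\<in>Basis. - (a / DIM('a)) * \<bar>w \<bullet> b\<bar>)"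
    by (simp add: S_def sum_distrib_left sum_negf)
  finally have "exp (- a * norm w powr \<beta>) \<le> exp (a + (\<Sum>b\<in>Basis. - (a / DIM('a)) * \<bar>w \<bullet> b\<bar>))"
    by simp
  then show ?thesis
    by (simp only: exp_add exp_sum[OF finite_Basis])
qed

lemma nn_integral_exp_norm_powr_finite:
  assumes a: "0 < a" and \<beta>: "1 \<le> \<beta>"
  shows "(\<integral>\<^sup>+w. ennreal (exp (- a * norm (w::'a::euclidean_space) powr \<beta>)) \<partial>lborel) < \<infinity>"
proof -
  define k where "k = a / DIM('a)"
  have "ennreal (exp (- a * norm w powr \<beta>)) \<le> ennreal (exp a) * (\<Prod>b\<in>Basis. ennreal (exp (- k * \<bar>w \<bullet> b\<bar>)))"
    for w :: 'a
  proof -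
    have "ennreal (exp (- a * norm w powr \<beta>)) \<le> ennreal (exp a * (\<Prod>b\<in>Basis. exp (- k * \<bar>w \<bullet> b\<bar>)))"
      unfolding k_def by (rule ennreal_leI exp_neg_norm_powr_le_prod[OF a \<beta>])+
    then show ?thesis
      by (simp add: prod_ennreal ennreal_mult prod_nonneg)
  qed
  then have "(\<integral>\<^sup>+w. ennreal (exp (- a * norm (w::'a) powr \<beta>)) \<partial>lborel)
      \<le> (\<integral>\<^sup>+w. ennreal (exp a) * (\<Prod>b\<in>Basis. ennreal (exp (- k * \<bar>(w::'a) \<bullet> b\<bar>))) \<partial>lborel)"
    by (intro nn_integral_mono)
  also have "\<dots> = ennreal (exp a) * (\<integral>\<^sup>+w. (\<Prod>b\<in>Basis. ennreal (exp (- k * \<bar>(w::'a) \<bullet> b\<bar>))) \<partial>lborel)"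
    by (rule nn_integral_cmult) measurable
  also have "(\<integral>\<^sup>+w. (\<Prod>b\<in>Basis. ennreal (exp (- k * \<bar>(w::'a) \<bullet> b\<bar>))) \<partial>lborel)
      = (\<Prod>b\<in>(Basis::'a set). (\<integral>\<^sup>+x. ennreal (exp (- k * \<bar>x\<bar>)) \<partial>lborel))"
    by (rule nn_integral_lborel_prod) auto
  also have "ennreal (exp a) * \<dots> < \<infinity>"
  proof -
    have "(\<Prod>b\<in>(Basis::'a set). (\<integral>\<^sup>+x. ennreal (exp (- k * \<bar>x\<bar>)) \<partial>lborel)) \<noteq> \<infinity>"
      using nn_integral_exp_abs_finite[of k] a by (simp add: k_def power_eq_top_ennreal_iff)
    then show ?thesis
      by (simp add: ennreal_mult_eq_top_iff less_top[symmetric])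
  qed
  finally show ?thesis .
qed

lemma nn_integral_exp_norm_powr_scaled:
  fixes u :: "'a::euclidean_space" and a \<tau> \<beta> \<gamma> :: real
  assumes a: "0 < a" and \<tau>: "0 < \<tau>" and \<beta>: "0 < \<beta>" and \<gamma>: "0 < \<gamma>"
  shows "(\<integral>\<^sup>+y. ennreal (exp (- a * norm (u - y) powr \<beta> / \<tau> powr \<gamma>)) \<partial>lborel)
       = ennreal (\<tau> powr (\<gamma> * real DIM('a) / \<beta>)) * (\<integral>\<^sup>+w. ennreal (exp (- a * norm (w::'a) powr \<beta>)) \<partial>lborel)"
proof -
  define \<sigma> where "\<sigma> = \<tau> powr (\<gamma> / \<beta>)"
  have \<sigma>: "0 < \<sigma>" using \<tau> by (simp add: \<sigma>_def)
  have \<sigma>\<beta>: "\<sigma> powr \<beta> = \<tau> powr \<gamma>" using \<tau> \<beta> by (simp add: \<sigma>_def powr_powr)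
  define h where "h y = ennreal (exp (- a * norm (u - y) powr \<beta> / \<tau> powr \<gamma>))" for y :: 'a
  have hm[measurable]: "h \<in> borel_measurable borel" unfolding h_def by measurable
  have "(\<integral>\<^sup>+y. h y \<partial>lborel) = (\<integral>\<^sup>+y. h y \<partial>(density (distr lborel borel (\<lambda>x. u + (- \<sigma>) *\<^sub>R x)) (\<lambda>x. ennreal (\<bar>- \<sigma>\<bar> ^ DIM('a)))))"
    using lborel_affine[of "- \<sigma>" u] \<sigma> by simp
  also have "\<dots> = (\<integral>\<^sup>+x. ennreal (\<bar>- \<sigma>\<bar> ^ DIM('a)) * h (u + (- \<sigma>) *\<^sub>R x) \<partial>lborel)"
    by (simp add: nn_integral_density nn_integral_distr)
  also have "\<dots> = (\<integral>\<^sup>+x. ennreal (\<tau> powr (\<gamma> * real DIM('a) / \<beta>)) * ennreal (exp (- a * norm (x::'a) powr \<beta>)) \<partial>lborel)"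
  proof (rule nn_integral_cong)
    fix x :: 'a
    have 1: "\<bar>- \<sigma>\<bar> ^ DIM('a) = \<tau> powr (\<gamma> * real DIM('a) / \<beta>)"
      using \<sigma> \<tau> by (simp add: \<sigma>_def powr_realpow[symmetric] powr_powr)
    have "norm (u - (u + (- \<sigma>) *\<^sub>R x)) powr \<beta> = \<sigma> powr \<beta> * norm x powr \<beta>"
      using \<sigma> by (simp add: powr_mult)
    then have 2: "h (u + (- \<sigma>) *\<^sub>R x) = ennreal (exp (- a * norm x powr \<beta>))"
      using \<tau> by (simp add: h_def \<sigma>\<beta>)
    show "ennreal (\<bar>- \<sigma>\<bar> ^ DIM('a)) * h (u + (- \<sigma>) *\<^sub>R x) = ennreal (\<tau> powr (\<gamma> * real DIM('a) / \<beta>)) * ennreal (exp (- a * norm x powr \<beta>))"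
      by (simp only: 1 2)
  qed
  also have "\<dots> = ennreal (\<tau> powr (\<gamma> * real DIM('a) / \<beta>)) * (\<integral>\<^sup>+w. ennreal (exp (- a * norm (w::'a) powr \<beta>)) \<partial>lborel)"
    by (rule nn_integral_cmult) measurable
  finally show ?thesis by (simp add: h_def)
qed

lemma nn_integral_decay_kernel_powr:
  fixes u :: "'a::euclidean_space"
  assumes "0 < C" "0 < c" "0 < \<tau>" "0 < \<beta>" "0 < \<gamma>" "0 < m"
  shows "(\<integral>\<^sup>+y. ennreal ((C * \<tau> powr (- \<alpha>) * exp (- c * norm (u - y) powr \<beta> / \<tau> powr \<gamma>)) powr m) \<partial>lborel)
    = ennreal ((C * \<tau> powr (- \<alpha>)) powr m * \<tau> powr (\<gamma> * real DIM('a) / \<beta>))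
      * (\<integral>\<^sup>+w. ennreal (exp (- (c * m) * norm (w::'a) powr \<beta>)) \<partial>lborel)"
proof -
  have "(C * \<tau> powr (- \<alpha>) * exp (- c * norm (u - y) powr \<beta> / \<tau> powr \<gamma>)) powr m
      = (C * \<tau> powr (- \<alpha>)) powr m * exp (- (c * m) * norm (u - y) powr \<beta> / \<tau> powr \<gamma>)" for y
  proof -
    have "exp (- c * norm (u - y) powr \<beta> / \<tau> powr \<gamma>) powr m = exp (- (c * m) * norm (u - y) powr \<beta> / \<tau> powr \<gamma>)"
      by (simp add: powr_def)
    then show ?thesis
      using assms by (simp add: powr_mult)
  qed
  then have "(\<integral>\<^sup>+y. ennreal ((C * \<tau> powr (- \<alpha>) * exp (- c * norm (u - y) powr \<beta> / \<tau> powr \<gamma>)) powr m) \<partial>lborel)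
      = ennreal ((C * \<tau> powr (- \<alpha>)) powr m)
        * (\<integral>\<^sup>+y. ennreal (exp (- (c * m) * norm (u - y) powr \<beta> / \<tau> powr \<gamma>)) \<partial>lborel)"
    by (simp add: ennreal_mult nn_integral_cmult)
  also have "\<dots> = ennreal ((C * \<tau> powr (- \<alpha>)) powr m) * (ennreal (\<tau> powr (\<gamma> * real DIM('a) / \<beta>))
        * (\<integral>\<^sup>+w. ennreal (exp (- (c * m) * norm (w::'a) powr \<beta>)) \<partial>lborel))"
    using assms nn_integral_exp_norm_powr_scaled[of "c * m" \<tau> \<beta> \<gamma> u] by simp
  finally show ?thesis
    by (simp add: ennreal_mult mult.assoc)
qed

lemma Lp_norm_top_decay_kernel_le:
  assumes "0 < C" "0 < c" "0 < \<tau>"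
  shows "Lp_norm M top (\<lambda>y. ennreal (C * \<tau> powr (- \<alpha>) * exp (- c * norm (u - y) powr \<beta> / \<tau> powr \<gamma>)))
    \<le> ennreal (C * \<tau> powr (- \<alpha>))"
proof (intro Lp_norm_top_le AE_I2 ennreal_leI mult_left_le)
  show "exp (- c * norm (u - y) powr \<beta> / \<tau> powr \<gamma>) \<le> 1" for y
    using assms by (simp add: divide_nonneg_pos)
qed (use assms in simp)

lemma Lp_norm_decay_kernel_le_ennreal:
  fixes Q :: "'a::euclidean_space set"
  assumes "Q \<in> sets borel" "0 < C" "0 < c" "1 \<le> \<beta>" "0 < \<gamma>" "1 \<le> m" "0 < \<tau>"
  defines "I \<equiv> enn2real (\<integral>\<^sup>+w. ennreal (exp (- (c * m) * norm (w::'a) powr \<beta>)) \<partial>lborel)"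
  shows "Lp_norm (restrict_space lborel Q) (ennreal m)
      (\<lambda>y. ennreal (C * \<tau> powr (- \<alpha>) * exp (- c * norm (u - y) powr \<beta> / \<tau> powr \<gamma>)))
    \<le> ennreal (C * (I + 1) powr (1 / m) * \<tau> powr (- \<alpha> + \<gamma> * real DIM('a) / (\<beta> * m)))"
proof -
  define K e where "K = C * (I + 1) powr (1 / m)" and "e = - \<alpha> + \<gamma> * real DIM('a) / (\<beta> * m)"
  have I: "(\<integral>\<^sup>+w. ennreal (exp (- (c * m) * norm (w::'a) powr \<beta>)) \<partial>lborel) = ennreal I" "0 \<le> I"
    using nn_integral_exp_norm_powr_finite[of "c * m" \<beta>] assms by (auto simp: I_def ennreal_enn2real_if less_top)
  have "(\<integral>\<^sup>+y. enn_powr (ennreal (C * \<tau> powr (- \<alpha>) * exp (- c * norm (u - y) powr \<beta> / \<tau> powr \<gamma>))) m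
      \<partial>restrict_space lborel Q)
    \<le> (\<integral>\<^sup>+y. ennreal ((C * \<tau> powr (- \<alpha>) * exp (- c * norm (u - y) powr \<beta> / \<tau> powr \<gamma>)) powr m) \<partial>lborel)"
    using assms by (subst nn_integral_restrict_space) (auto intro!: nn_integral_mono
      simp: enn_powr_ennreal indicator_def)
  also have "\<dots> = ennreal ((C * \<tau> powr (- \<alpha>)) powr m * \<tau> powr (\<gamma> * real DIM('a) / \<beta>)) * ennreal I"
    using assms I nn_integral_decay_kernel_powr[of C c \<tau> \<beta> \<gamma> m \<alpha> u] by simp
  also have "\<dots> \<le> ennreal ((C * \<tau> powr (- \<alpha>)) powr m * \<tau> powr (\<gamma> * real DIM('a) / \<beta>) * (I + 1))"
    using I by (simp add: ennreal_mult[symmetric] ennreal_leI mult_left_mono)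
  also have "(C * \<tau> powr (- \<alpha>)) powr m * \<tau> powr (\<gamma> * real DIM('a) / \<beta>) * (I + 1) = (K * \<tau> powr e) powr m"
  proof -
    have "e * m = - \<alpha> * m + \<gamma> * real DIM('a) / \<beta>"
      using assms by (simp add: e_def field_simps)
    moreover have "\<tau> powr (- (\<alpha> * m)) * \<tau> powr (\<gamma> * real DIM('a) / \<beta>) = \<tau> powr (\<gamma> * real DIM('a) / \<beta> - \<alpha> * m)"
      by (simp add: powr_add[symmetric])
    ultimately show ?thesis
      using assms I by (simp add: K_def powr_mult powr_powr powr_add)
  qed
  finally have "enn_powr (\<integral>\<^sup>+y. enn_powr (ennreal (C * \<tau> powr (- \<alpha>)
      * exp (- c * norm (u - y) powr \<beta> / \<tau> powr \<gamma>))) m \<partial>restrict_space lborel Q) (1 / m)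
    \<le> enn_powr (ennreal ((K * \<tau> powr e) powr m)) (1 / m)"
    using assms by (intro enn_powr_mono) auto
  also have "\<dots> = ennreal (K * \<tau> powr e)"
    using I assms by (simp add: K_def enn_powr_ennreal powr_powr)
  finally show ?thesis
    using assms by (simp add: Lp_norm_ennreal K_def e_def)
qed

lemma Lp_norm_decay_kernel_le:
  fixes Q :: "'a::euclidean_space set"
  assumes "Q \<in> sets borel" "0 < C" "0 < c" "1 \<le> \<beta>" "0 < \<gamma>" "1 \<le> r"
  shows "\<exists>K>0. \<forall>\<tau>>0. \<forall>u. Lp_norm (restrict_space lborel Q) r
      (\<lambda>y. ennreal (C * \<tau> powr (- \<alpha>) * exp (- c * norm (u - y) powr \<beta> / \<tau> powr \<gamma>)))
    \<le> ennreal (K * \<tau> powr (- \<alpha> + \<gamma> * real DIM('a) * recip r / \<beta>))"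
proof (cases r)
  case top
  have exponent: "- \<alpha> + \<gamma> * real DIM('a) * recip top / \<beta> = - \<alpha>"
    by simp
  show ?thesis
    unfolding top exponent by (intro exI[of _ C] conjI allI impI assms(2) Lp_norm_top_decay_kernel_le[OF assms(2,3)])
next
  case (real m)
  define I where "I = enn2real (\<integral>\<^sup>+w. ennreal (exp (- (c * m) * norm (w::'a) powr \<beta>)) \<partial>lborel)"
  have "0 \<le> I"
    by (simp add: I_def)
  then have pos: "0 < C * (I + 1) powr (1 / m)"
    using assms by simp
  have m: "1 \<le> m"
    using real assms by simp
  have exponent: "- \<alpha> + \<gamma> * real DIM('a) * recip (ennreal m) / \<beta> = - \<alpha> + \<gamma> * real DIM('a) / (\<beta> * m)"
    using m by (simp add: recip_ennreal)
  have bound: "Lp_norm (restrict_space lborel Q) (ennreal m)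
      (\<lambda>y. ennreal (C * \<tau> powr (- \<alpha>) * exp (- c * norm (u - y) powr \<beta> / \<tau> powr \<gamma>)))
    \<le> ennreal (C * (I + 1) powr (1 / m) * \<tau> powr (- \<alpha> + \<gamma> * real DIM('a) / (\<beta> * m)))"
    if "0 < \<tau>" for \<tau> u
    unfolding I_def by (rule Lp_norm_decay_kernel_le_ennreal[OF assms(1-5) m that])
  show ?thesis
    unfolding real exponent by (intro exI[of _ "C * (I + 1) powr (1 / m)"] conjI allI impI pos bound)
qed

section \<open>Integrals in time\<close>

lemma nn_integral_powr_diff:
  fixes e t :: real assumes e: "-1 < e" and t: "0 \<le> t"
  shows "(\<integral>\<^sup>+s. ennreal ((t - s) powr e) * indicator {0..t} s \<partial>lborel) = ennreal (t powr (e + 1) / (e + 1))"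
proof -
  define f where "f x = ennreal (indicator {0..t} x * x powr e)" for x :: real
  have fm: "f \<in> borel_measurable borel" unfolding f_def by measurable
  have "(\<integral>\<^sup>+x. f x \<partial>lborel) = ennreal (t powr (e + 1) / (e + 1))"
    unfolding f_def by (rule nn_integral_has_integral_lebesgue) (use has_integral_powr_from_0[OF e t] in auto)
  moreover have "(\<integral>\<^sup>+x. f x \<partial>lborel) = ennreal \<bar>- 1\<bar> * (\<integral>\<^sup>+x. f (t + (- 1) * x) \<partial>lborel)"
    by (rule nn_integral_real_affine[OF fm]) simp
  moreover have "(\<integral>\<^sup>+x. f (t + (- 1) * x) \<partial>lborel) = (\<integral>\<^sup>+s. ennreal ((t - s) powr e) * indicator {0..t} s \<partial>lborel)"
    by (intro nn_integral_cong) (auto simp: f_def indicator_def)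
  ultimately show ?thesis by simp
qed

lemma conjugate_exponent_exists:
  assumes "1 \<le> p"
  obtains p' where "1 \<le> p'" "recip p + recip p' = 1"
proof (cases "recip p = 1")
  case True
  then show ?thesis by (intro that[of top]) auto
next
  case False
  then have p: "0 \<le> recip p" "recip p < 1"
    using recip_le_1[OF assms] recip_nonneg[of p] by auto
  then have "recip (ennreal (1 / (1 - recip p))) = 1 - recip p"
    by (simp add: recip_ennreal)
  moreover have "1 \<le> ennreal (1 / (1 - recip p))"
    using p by (simp add: ennreal_1[symmetric] del: ennreal_1)
  ultimately show ?thesis
    by (intro that[of "ennreal (1 / (1 - recip p))"]) auto
qed

lemma Lp_norm_powr_diff_bounded:
  assumes T: "0 < T" and p: "1 \<le> p" and e: "- recip p < e"
  shows "\<exists>K>0. \<forall>t\<in>{0..T}.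
    Lp_norm (restrict_space lborel {0..T}) p (\<lambda>s. ennreal (indicator {0..t} s * (t - s) powr e)) \<le> ennreal K"
proof (cases p)
  case top
  then have "0 < e" using e by simp
  have "indicator {0..t} s * (t - s) powr e \<le> T powr e" if "t \<in> {0..T}" "s \<in> {0..T}" for s t
    using that \<open>0 < e\<close> by (auto simp: indicator_def intro: powr_mono2)
  then show ?thesis
    using T top by (intro exI[of _ "T powr e"]) (auto intro!: Lp_norm_top_le AE_I2 ennreal_leI)
next
  case (real l)
  with p e have l: "1 \<le> l" "-1 < e * l"
    by (auto simp: recip_ennreal field_simps)
  define K where "K = (T powr (e * l + 1) / (e * l + 1)) powr (1 / l)"
  have "Lp_norm (restrict_space lborel {0..T}) p (\<lambda>s. ennreal (indicator {0..t} s * (t - s) powr e)) \<le> ennreal K"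
    if t: "t \<in> {0..T}" for t
  proof -
    have "(\<integral>\<^sup>+s. enn_powr (ennreal (indicator {0..t} s * (t - s) powr e)) l \<partial>restrict_space lborel {0..T})
        = (\<integral>\<^sup>+s. ennreal ((t - s) powr (e * l)) * indicator {0..t} s \<partial>lborel)"
      using t l by (subst nn_integral_restrict_space)
        (auto intro!: nn_integral_cong simp: enn_powr_ennreal indicator_def powr_powr)
    also have "\<dots> = ennreal (t powr (e * l + 1) / (e * l + 1))"
      using t l by (intro nn_integral_powr_diff) auto
    also have "\<dots> \<le> ennreal (T powr (e * l + 1) / (e * l + 1))"
      using t l by (intro ennreal_leI divide_right_mono powr_mono2) auto
    finally have "enn_powr (\<integral>\<^sup>+s. enn_powr (ennreal (indicator {0..t} s * (t - s) powr e)) l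
        \<partial>restrict_space lborel {0..T}) (1 / l) \<le> enn_powr (ennreal (T powr (e * l + 1) / (e * l + 1))) (1 / l)"
      using l by (intro enn_powr_mono) auto
    then show ?thesis
      using real l T by (simp add: Lp_norm_ennreal K_def enn_powr_ennreal)
  qed
  moreover have "0 < K"
    using T l by (simp add: K_def)
  ultimately show ?thesis
    by (intro exI[of _ K] conjI ballI)
qed

lemma nn_integral_powr_diff_le_Lp_norm:
  assumes T: "0 < T" and lam: "1 \<le> lam" and e: "recip lam - 1 < e"
  shows "\<exists>K>0. \<forall>b \<in> borel_measurable borel. \<forall>t\<in>{0..T}.
    (\<integral>\<^sup>+s\<in>{0..t}. ennreal ((t - s) powr e) * b s \<partial>lborel) \<le> ennreal K * Lp_norm (restrict_space lborel {0..T}) lam b"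
proof -
  obtain lam' where lam': "1 \<le> lam'" "recip lam + recip lam' = 1"
    using conjugate_exponent_exists[OF lam] by blast
  obtain K where K: "0 < K" and bound: "\<And>t. t \<in> {0..T} \<Longrightarrow>
      Lp_norm (restrict_space lborel {0..T}) lam' (\<lambda>s. ennreal (indicator {0..t} s * (t - s) powr e)) \<le> ennreal K"
    using Lp_norm_powr_diff_bounded[OF T lam'(1), of e] lam' e by auto
  have "(\<integral>\<^sup>+s\<in>{0..t}. ennreal ((t - s) powr e) * b s \<partial>lborel) \<le> ennreal K * Lp_norm (restrict_space lborel {0..T}) lam b"
    if [measurable]: "b \<in> borel_measurable borel" and t: "t \<in> {0..T}" for b t
  proof -
    have "(\<integral>\<^sup>+s\<in>{0..t}. ennreal ((t - s) powr e) * b s \<partial>lborel)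
        = (\<integral>\<^sup>+s. ennreal (indicator {0..t} s * (t - s) powr e) * b s \<partial>restrict_space lborel {0..T})"
      using t by (subst nn_integral_restrict_space) (auto intro!: nn_integral_cong simp: indicator_def)
    also have "\<dots> \<le> Lp_norm (restrict_space lborel {0..T}) lam' (\<lambda>s. ennreal (indicator {0..t} s * (t - s) powr e))
        * Lp_norm (restrict_space lborel {0..T}) lam b"
      using lam lam' by (intro nn_integral_mult_le_Lp_norm measurable_restrict_space1) (auto simp: add.commute)
    also have "\<dots> \<le> ennreal K * Lp_norm (restrict_space lborel {0..T}) lam b"
      using bound[OF t] by (rule mult_right_mono) simp
    finally show ?thesis .
  qed
  then show ?thesis
    using K by blast
qed

section \<open>The operator \<open>J\<close>\<close>

lemma measurable_ident_pair_measure: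
  assumes "(\<lambda>x. x) \<in> M \<rightarrow>\<^sub>M M'" "(\<lambda>y. y) \<in> N \<rightarrow>\<^sub>M N'"
  shows "(\<lambda>z. z) \<in> M \<Otimes>\<^sub>M N \<rightarrow>\<^sub>M M' \<Otimes>\<^sub>M N'"
proof -
  have "(\<lambda>z. (fst z, snd z)) \<in> M \<Otimes>\<^sub>M N \<rightarrow>\<^sub>M M' \<Otimes>\<^sub>M N'"
    using assms by (intro measurable_Pair measurable_fst'' measurable_snd'')
  then show ?thesis by simp
qed

lemma measurable_ident_restrict_space_lborel: "(\<lambda>x. x) \<in> restrict_space lborel A \<rightarrow>\<^sub>M borel"
  by (rule measurable_restrict_space1) simp

lemma borel_measurable_restrict_space_lborel_pair:
  "f \<in> borel_measurable (borel \<Otimes>\<^sub>M borel) \<Longrightarrow>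
    f \<in> borel_measurable (restrict_space lborel A \<Otimes>\<^sub>M restrict_space lborel B)"
  by (rule measurable_compose[OF measurable_ident_pair_measure[OF
        measurable_ident_restrict_space_lborel measurable_ident_restrict_space_lborel]])

lemma borel_measurable_restrict_space_lborel_triple:
  "f \<in> borel_measurable (borel \<Otimes>\<^sub>M borel \<Otimes>\<^sub>M borel) \<Longrightarrow>
    f \<in> borel_measurable (restrict_space lborel A \<Otimes>\<^sub>M restrict_space lborel B \<Otimes>\<^sub>M restrict_space lborel C)"
  by (rule measurable_compose[OF measurable_ident_pair_measure[OF measurable_ident_restrict_space_lborel
        measurable_ident_pair_measure[OF measurable_ident_restrict_space_lborel
          measurable_ident_restrict_space_lborel]]])

lemma abs_set_integral_le_nn_integral:
  fixes f :: "'b \<Rightarrow> real"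
  shows "ennreal \<bar>LINT s:A|M. f s\<bar> \<le> (\<integral>\<^sup>+s. indicator A s * ennreal \<bar>f s\<bar> \<partial>M)"
proof (cases "integrable M (\<lambda>s. indicator A s *\<^sub>R f s)")
  case True
  then have "ennreal \<bar>LINT s:A|M. f s\<bar> \<le> (\<integral>\<^sup>+s. ennreal (norm (indicator A s *\<^sub>R f s)) \<partial>M)"
    unfolding set_lebesgue_integral_def real_norm_def[symmetric] by (rule integral_norm_bound_ennreal)
  also have "\<dots> = (\<integral>\<^sup>+s. indicator A s * ennreal \<bar>f s\<bar> \<partial>M)"
    by (intro nn_integral_cong) (simp add: indicator_def)
  finally show ?thesis .
next
  case False
  then show ?thesis
    by (simp add: set_lebesgue_integral_def not_integrable_integral_eq)
qed

lemma abs_set_integral_mult_le: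
  assumes A: "A \<in> sets M" and h: "\<And>y. y \<in> A \<Longrightarrow> \<bar>h y\<bar> \<le> k y"
  shows "ennreal \<bar>LINT y:A|M. h y * g y\<bar> \<le> (\<integral>\<^sup>+y. ennreal (k y) * ennreal \<bar>g y\<bar> \<partial>restrict_space M A)"
proof -
  have "ennreal \<bar>h y * g y\<bar> \<le> ennreal (k y) * ennreal \<bar>g y\<bar>" if "y \<in> A" for y
  proof -
    have "\<bar>h y * g y\<bar> \<le> k y * \<bar>g y\<bar>" "0 \<le> k y"
      using h[OF that] by (simp_all add: abs_mult mult_right_mono order.trans[OF abs_ge_zero])
    then show ?thesis
      by (simp add: ennreal_leI flip: ennreal_mult)
  qed
  then have "(\<integral>\<^sup>+y. indicator A y * ennreal \<bar>h y * g y\<bar> \<partial>M)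
      \<le> (\<integral>\<^sup>+y. ennreal (k y) * ennreal \<bar>g y\<bar> \<partial>restrict_space M A)"
    using A by (subst nn_integral_restrict_space) (auto intro!: nn_integral_mono simp: indicator_def)
  then show ?thesis
    by (rule order.trans[OF abs_set_integral_le_nn_integral])
qed

lemma Jop_le_nn_integral:
  fixes Q :: "'a::euclidean_space set" and \<kappa> :: "real \<Rightarrow> 'a \<Rightarrow> real"
  assumes Q: "Q \<in> sets borel"
    and bound: "\<And>s y. t0 \<le> s \<Longrightarrow> s < t \<Longrightarrow> y \<in> Q \<Longrightarrow> \<bar>H t x s y\<bar> \<le> \<kappa> s y"
  shows "ennreal \<bar>Jop Q H v t0 t x\<bar>
    \<le> (\<integral>\<^sup>+s. \<integral>\<^sup>+y. ennreal (\<kappa> s y) * ennreal \<bar>v s y\<bar> \<partial>restrict_space lborel Q \<partial>restrict_space lborel {t0..<t})"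
proof -
  have "ennreal \<bar>Jop Q H v t0 t x\<bar> \<le> (\<integral>\<^sup>+s. indicator {t0..t} s * ennreal \<bar>LINT y:Q|lborel. H t x s y * v s y\<bar> \<partial>lborel)"
    unfolding Jop_def by (rule abs_set_integral_le_nn_integral)
  also have "\<dots> \<le> (\<integral>\<^sup>+s. (\<integral>\<^sup>+y. ennreal (\<kappa> s y) * ennreal \<bar>v s y\<bar> \<partial>restrict_space lborel Q)
      * indicator {t0..<t} s \<partial>lborel)"
  proof (rule nn_integral_mono_AE)
    show "AE s in lborel. indicator {t0..t} s * ennreal \<bar>LINT y:Q|lborel. H t x s y * v s y\<bar>
        \<le> (\<integral>\<^sup>+y. ennreal (\<kappa> s y) * ennreal \<bar>v s y\<bar> \<partial>restrict_space lborel Q) * indicator {t0..<t} s"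
      using AE_lborel_singleton[of t]
    proof eventually_elim
      case (elim s)
      then show ?case
        using abs_set_integral_mult_le[where M = lborel and h = "H t x s" and k = "\<kappa> s" and g = "v s"] Q bound[of s]
        by (cases "t0 \<le> s \<and> s < t") (auto simp: indicator_def)
    qed
  qed
  also have "\<dots> = (\<integral>\<^sup>+s. \<integral>\<^sup>+y. ennreal (\<kappa> s y) * ennreal \<bar>v s y\<bar> \<partial>restrict_space lborel Q
      \<partial>restrict_space lborel {t0..<t})"
    by (simp add: nn_integral_restrict_space)
  finally show ?thesis .
qed

lemma borel_measurable_Lp_norm_abs_section:
  fixes v :: "real \<Rightarrow> 'a::euclidean_space \<Rightarrow> real"
  assumes Q: "Q \<in> sets borel" and v: "(\<lambda>(s, y). v s y) \<in> borel_measurable borel"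
  shows "(\<lambda>s. Lp_norm (restrict_space lborel Q) p (\<lambda>y. ennreal \<bar>v s y\<bar>)) \<in> borel_measurable borel"
proof (rule borel_measurable_Lp_norm)
  show "sigma_finite_measure (restrict_space lborel Q)"
    using Q by (intro sigma_finite_measure_restrict_space) (auto intro: lborel.sigma_finite_measure_axioms)
  have [measurable]: "case_prod v \<in> borel_measurable (borel \<Otimes>\<^sub>M borel)"
    using v by (simp only: borel_prod)
  have "(\<lambda>(s, y). ennreal \<bar>v s y\<bar>) \<in> borel_measurable (borel \<Otimes>\<^sub>M borel)"
    by measurable
  then show "(\<lambda>(s, y). ennreal \<bar>v s y\<bar>) \<in> borel_measurable (borel \<Otimes>\<^sub>M restrict_space lborel Q)"
    by (rule measurable_compose[OF measurable_ident_pair_measure[OF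
          measurable_ident_sets[OF refl] measurable_ident_restrict_space_lborel]])
qed

lemma recip_inverse_ennreal: "0 \<le> x \<Longrightarrow> recip (inverse (ennreal x)) = x"
  by (cases "x = 0") (auto simp: recip_def inverse_ennreal)

lemma one_le_inverse_ennreal:
  assumes "x \<le> 1"
  shows "1 \<le> inverse (ennreal x)"
proof (cases "0 < x")
  case True
  then have "ennreal 1 \<le> ennreal (inverse x)"
    using assms by (intro ennreal_leI one_le_inverse)
  with True show ?thesis
    by (simp add: inverse_ennreal)
next
  case False
  then have "ennreal x = 0"
    by (simp add: ennreal_eq_0_iff)
  then show ?thesis by simp
qed

lemma nn_integral_restrict_space_Ico:
  fixes t0 t :: real
  assumes [measurable]: "g \<in> borel_measurable borel" "b \<in> borel_measurable borel" and K: "0 \<le> K"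
  shows "(\<integral>\<^sup>+s. ennreal (K * g s) * b s \<partial>restrict_space lborel {t0..<t})
    = ennreal K * (\<integral>\<^sup>+s\<in>{t0..t}. ennreal (g s) * b s \<partial>lborel)"
proof -
  have "(\<integral>\<^sup>+s. ennreal (K * g s) * b s \<partial>restrict_space lborel {t0..<t})
      = (\<integral>\<^sup>+s. ennreal (K * g s) * b s * indicator {t0..<t} s \<partial>lborel)"
    by (rule nn_integral_restrict_space) simp
  also have "\<dots> = (\<integral>\<^sup>+s. ennreal K * (ennreal (g s) * b s * indicator {t0..t} s) \<partial>lborel)"
    using AE_lborel_singleton[of t]
  proof (intro nn_integral_cong_AE, eventually_elim)
    case (elim s)
    then show ?case
      using K by (cases "s \<in> {t0..<t}") (auto simp: ennreal_mult' mult.assoc)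
  qed
  also have "\<dots> = ennreal K * (\<integral>\<^sup>+s\<in>{t0..t}. ennreal (g s) * b s \<partial>lborel)"
    by (rule nn_integral_cmult) measurable
  finally show ?thesis .
qed

lemma Young_convolution_restrict_space:
  fixes Q :: "'a::euclidean_space set" and \<kappa> :: "real \<Rightarrow> 'a \<Rightarrow> real" and f :: "real \<Rightarrow> 'a \<Rightarrow> ennreal"
    and \<rho> q r :: ennreal and t0 t :: real
  assumes Q: "Q \<in> sets borel" and "0 < K"
    and [measurable]: "(\<lambda>(\<tau>, z). \<kappa> \<tau> z) \<in> borel_measurable (borel \<Otimes>\<^sub>M borel)" and even: "\<And>\<tau> z. \<kappa> \<tau> (- z) = \<kappa> \<tau> z"
    and f: "(\<lambda>(s, y). f s y) \<in> borel_measurable (borel \<Otimes>\<^sub>M borel)"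
    and exps: "1 \<le> \<rho>" "\<rho> \<le> q" "1 \<le> r" "recip r = recip q - recip \<rho> + 1"
    and K: "\<And>\<tau> u. 0 < \<tau> \<Longrightarrow> Lp_norm (restrict_space lborel Q) r (\<lambda>y. ennreal (\<kappa> \<tau> (u - y))) \<le> ennreal (K * \<tau> powr e)"
  shows "Lp_norm (restrict_space lborel Q) q (\<lambda>x. \<integral>\<^sup>+s. \<integral>\<^sup>+y. ennreal (\<kappa> (t - s) (x - y)) * f s y
      \<partial>restrict_space lborel Q \<partial>restrict_space lborel {t0..<t})
    \<le> (\<integral>\<^sup>+s. ennreal (K * (t - s) powr e) * Lp_norm (restrict_space lborel Q) \<rho> (f s) \<partial>restrict_space lborel {t0..<t})"
proof -
  have \<sigma>: "sigma_finite_measure (restrict_space lborel A)" if "A \<in> sets borel" for A :: "'b::euclidean_space set"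
    using that by (intro sigma_finite_measure_restrict_space) (auto intro: lborel.sigma_finite_measure_axioms)
  show ?thesis
  proof (rule Young_integral_operator[OF \<sigma>[OF Q] \<sigma> \<sigma>[OF Q] _ _ _ _ exps])
    have "(\<lambda>(x, s, y). ennreal (\<kappa> (t - s) (x - y))) \<in> borel_measurable (borel \<Otimes>\<^sub>M borel \<Otimes>\<^sub>M borel)"
      by measurable
    then show "(\<lambda>(x, s, y). ennreal (\<kappa> (t - s) (x - y)))
        \<in> borel_measurable (restrict_space lborel Q \<Otimes>\<^sub>M restrict_space lborel {t0..<t} \<Otimes>\<^sub>M restrict_space lborel Q)"
      by (rule borel_measurable_restrict_space_lborel_triple)
    show "(\<lambda>(s, y). f s y) \<in> borel_measurable (restrict_space lborel {t0..<t} \<Otimes>\<^sub>M restrict_space lborel Q)"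
      using f by (rule borel_measurable_restrict_space_lborel_pair)
    show "(\<lambda>s. K * (t - s) powr e) \<in> borel_measurable (restrict_space lborel {t0..<t})"
      by (rule measurable_restrict_space1) measurable
    show "0 < K * (t - s) powr e" if "s \<in> space (restrict_space lborel {t0..<t})" for s
      using that \<open>0 < K\<close> by simp
    show "Lp_norm (restrict_space lborel Q) r (\<lambda>y. ennreal (\<kappa> (t - s) (x - y))) \<le> ennreal (K * (t - s) powr e)"
      if "s \<in> space (restrict_space lborel {t0..<t})" for x s
      using that K[of "t - s" x] by simp
    show "Lp_norm (restrict_space lborel Q) r (\<lambda>x. ennreal (\<kappa> (t - s) (x - y))) \<le> ennreal (K * (t - s) powr e)"
      if "s \<in> space (restrict_space lborel {t0..<t})" for s y
      using that K[of "t - s" y] even[of "t - s" "y - _"] by simp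
  qed simp
qed

lemma Lp_norm_Jop_le:
  fixes Q :: "'a::euclidean_space set" and H :: "real \<Rightarrow> 'a \<Rightarrow> real \<Rightarrow> 'a \<Rightarrow> real"
    and \<rho> q :: ennreal
  assumes Q: "Q \<in> sets borel" and "0 < C" "0 < c" "1 \<le> \<beta>" "0 < \<gamma>"
    and H_bound: "\<And>s t x y. 0 \<le> s \<Longrightarrow> s < t \<Longrightarrow> t \<le> T \<Longrightarrow> x \<in> Q \<Longrightarrow> y \<in> Q \<Longrightarrow>
          \<bar>H t x s y\<bar> \<le> C * (t - s) powr (- \<alpha>) * exp (- c * norm (x - y) powr \<beta> / (t - s) powr \<gamma>)"
    and \<rho>: "1 \<le> \<rho>" "\<rho> \<le> q"
  defines "e \<equiv> - \<alpha> + \<gamma> * real DIM('a) * (recip q - recip \<rho> + 1) / \<beta>"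
  shows "\<exists>K>0. \<forall>v. (\<lambda>(s, y). v s y) \<in> borel_measurable borel \<longrightarrow> (\<forall>t0 t. 0 \<le> t0 \<and> t0 \<le> t \<and> t \<le> T \<longrightarrow>
      Lp_norm (restrict_space lborel Q) q (\<lambda>x. ennreal \<bar>Jop Q H v t0 t x\<bar>)
      \<le> ennreal K * (\<integral>\<^sup>+s\<in>{t0..t}. ennreal ((t - s) powr e)
            * Lp_norm (restrict_space lborel Q) \<rho> (\<lambda>y. ennreal \<bar>v s y\<bar>) \<partial>lborel))"
proof -
  define \<kappa> where "\<kappa> \<tau> z = C * \<tau> powr (- \<alpha>) * exp (- c * norm z powr \<beta> / \<tau> powr \<gamma>)" for \<tau> and z :: 'a
  define r where "r = inverse (ennreal (recip q - recip \<rho> + 1))"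
  have "recip q \<le> recip \<rho>" "recip \<rho> \<le> 1"
    using \<rho> by (auto intro: recip_antimono recip_le_1)
  then have r: "1 \<le> r" "recip r = recip q - recip \<rho> + 1"
    using recip_nonneg[of q] by (auto simp: r_def recip_inverse_ennreal one_le_inverse_ennreal)
  have "\<exists>K>0. \<forall>\<tau>>0. \<forall>u. Lp_norm (restrict_space lborel Q) r (\<lambda>y. ennreal (\<kappa> \<tau> (u - y)))
      \<le> ennreal (K * \<tau> powr e)"
    unfolding \<kappa>_def e_def r(2)[symmetric] by (rule Lp_norm_decay_kernel_le[OF Q assms(2-5) r(1)])
  then obtain K where "0 < K" and K: "\<forall>\<tau>>0. \<forall>u.
      Lp_norm (restrict_space lborel Q) r (\<lambda>y. ennreal (\<kappa> \<tau> (u - y))) \<le> ennreal (K * \<tau> powr e)"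
    by (elim exE conjE) (rule that)
  have "Lp_norm (restrict_space lborel Q) q (\<lambda>x. ennreal \<bar>Jop Q H v t0 t x\<bar>)
      \<le> ennreal K * (\<integral>\<^sup>+s\<in>{t0..t}. ennreal ((t - s) powr e)
            * Lp_norm (restrict_space lborel Q) \<rho> (\<lambda>y. ennreal \<bar>v s y\<bar>) \<partial>lborel)"
    if v: "(\<lambda>(s, y). v s y) \<in> borel_measurable borel" and t: "0 \<le> t0" "t0 \<le> t" "t \<le> T" for v t0 t
  proof -
    have [measurable]: "case_prod v \<in> borel_measurable (borel \<Otimes>\<^sub>M borel)"
      using v by (simp only: borel_prod)
    have \<kappa>_meas: "(\<lambda>(\<tau>, z). \<kappa> \<tau> z) \<in> borel_measurable (borel \<Otimes>\<^sub>M borel)"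
      unfolding \<kappa>_def by measurable
    have \<kappa>_even: "\<kappa> \<tau> (- z) = \<kappa> \<tau> z" for \<tau> z
      by (simp add: \<kappa>_def)
    have "\<bar>H t x s y\<bar> \<le> \<kappa> (t - s) (x - y)" if "x \<in> Q" "t0 \<le> s" "s < t" "y \<in> Q" for x s y
      unfolding \<kappa>_def by (rule H_bound) (use that t in auto)
    then have "Lp_norm (restrict_space lborel Q) q (\<lambda>x. ennreal \<bar>Jop Q H v t0 t x\<bar>)
        \<le> Lp_norm (restrict_space lborel Q) q (\<lambda>x. \<integral>\<^sup>+s. \<integral>\<^sup>+y. ennreal (\<kappa> (t - s) (x - y)) * ennreal \<bar>v s y\<bar>
          \<partial>restrict_space lborel Q \<partial>restrict_space lborel {t0..<t})"
      using Q by (intro Lp_norm_mono Jop_le_nn_integral) auto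
    also have "\<dots> \<le> (\<integral>\<^sup>+s. ennreal (K * (t - s) powr e) * Lp_norm (restrict_space lborel Q) \<rho> (\<lambda>y. ennreal \<bar>v s y\<bar>)
        \<partial>restrict_space lborel {t0..<t})"
      using \<open>0 < K\<close> \<rho> r K
      by (intro Young_convolution_restrict_space[OF Q _ \<kappa>_meas \<kappa>_even]) auto
    also have "\<dots> = ennreal K * (\<integral>\<^sup>+s\<in>{t0..t}. ennreal ((t - s) powr e)
        * Lp_norm (restrict_space lborel Q) \<rho> (\<lambda>y. ennreal \<bar>v s y\<bar>) \<partial>lborel)"
      using Q v \<open>0 < K\<close>
      by (intro nn_integral_restrict_space_Ico borel_measurable_Lp_norm_abs_section) auto
    finally show ?thesis .
  qed
  with \<open>0 < K\<close> show ?thesis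
    by blast
qed

lemma Lp_norm_top_Jop_le:
  fixes Q :: "'a::euclidean_space set" and H :: "real \<Rightarrow> 'a \<Rightarrow> real \<Rightarrow> 'a \<Rightarrow> real"
    and \<rho> q lam :: ennreal
  assumes Q: "Q \<in> sets borel" and "0 < C" "0 < c" "1 \<le> \<beta>" "0 < \<gamma>" and T: "0 < T"
    and H_bound: "\<And>s t x y. 0 \<le> s \<Longrightarrow> s < t \<Longrightarrow> t \<le> T \<Longrightarrow> x \<in> Q \<Longrightarrow> y \<in> Q \<Longrightarrow>
          \<bar>H t x s y\<bar> \<le> C * (t - s) powr (- \<alpha>) * exp (- c * norm (x - y) powr \<beta> / (t - s) powr \<gamma>)"
    and \<rho>: "1 \<le> \<rho>" "\<rho> \<le> q"
    and lam: "1 \<le> lam" "\<alpha> + recip lam < \<gamma> * real DIM('a) * (recip q - recip \<rho> + 1) / \<beta> + 1"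
  shows "\<exists>K>0. \<forall>v. (\<lambda>(s, y). v s y) \<in> borel_measurable borel \<longrightarrow>
      Lp_norm (restrict_space lborel {0..T}) top
        (\<lambda>t. Lp_norm (restrict_space lborel Q) q (\<lambda>x. ennreal \<bar>Jop Q H v 0 t x\<bar>))
      \<le> ennreal K * Lp_norm (restrict_space lborel {0..T}) lam
        (\<lambda>s. Lp_norm (restrict_space lborel Q) \<rho> (\<lambda>y. ennreal \<bar>v s y\<bar>))"
proof -
  define e where "e = - \<alpha> + \<gamma> * real DIM('a) * (recip q - recip \<rho> + 1) / \<beta>"
  obtain K1 where "0 < K1" and space_bound: "\<forall>v. (\<lambda>(s, y). v s y) \<in> borel_measurable borel \<longrightarrow>
      (\<forall>t0 t. 0 \<le> t0 \<and> t0 \<le> t \<and> t \<le> T \<longrightarrow> Lp_norm (restrict_space lborel Q) q (\<lambda>x. ennreal \<bar>Jop Q H v t0 t x\<bar>)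
        \<le> ennreal K1 * (\<integral>\<^sup>+s\<in>{t0..t}. ennreal ((t - s) powr e)
            * Lp_norm (restrict_space lborel Q) \<rho> (\<lambda>y. ennreal \<bar>v s y\<bar>) \<partial>lborel))"
  proof -
    have "\<exists>K>0. \<forall>v. (\<lambda>(s, y). v s y) \<in> borel_measurable borel \<longrightarrow>
      (\<forall>t0 t. 0 \<le> t0 \<and> t0 \<le> t \<and> t \<le> T \<longrightarrow> Lp_norm (restrict_space lborel Q) q (\<lambda>x. ennreal \<bar>Jop Q H v t0 t x\<bar>)
        \<le> ennreal K * (\<integral>\<^sup>+s\<in>{t0..t}. ennreal ((t - s) powr e)
            * Lp_norm (restrict_space lborel Q) \<rho> (\<lambda>y. ennreal \<bar>v s y\<bar>) \<partial>lborel))"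
      unfolding e_def by (rule Lp_norm_Jop_le[OF Q assms(2-5) _ \<rho>]) (rule H_bound)
    then show ?thesis
      by (elim exE conjE) (rule that)
  qed
  obtain K2 where "0 < K2" and time_bound: "\<And>b t. b \<in> borel_measurable borel \<Longrightarrow> t \<in> {0..T} \<Longrightarrow>
      (\<integral>\<^sup>+s\<in>{0..t}. ennreal ((t - s) powr e) * b s \<partial>lborel)
      \<le> ennreal K2 * Lp_norm (restrict_space lborel {0..T}) lam b"
    using nn_integral_powr_diff_le_Lp_norm[OF T lam(1), of e] lam(2) by (auto simp: e_def)
  have bound: "Lp_norm (restrict_space lborel Q) q (\<lambda>x. ennreal \<bar>Jop Q H v 0 t x\<bar>)
      \<le> ennreal (K1 * K2) * Lp_norm (restrict_space lborel {0..T}) lam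
        (\<lambda>s. Lp_norm (restrict_space lborel Q) \<rho> (\<lambda>y. ennreal \<bar>v s y\<bar>))"
    if v: "(\<lambda>(s, y). v s y) \<in> borel_measurable borel" and t: "t \<in> {0..T}" for v t
  proof -
    have "Lp_norm (restrict_space lborel Q) q (\<lambda>x. ennreal \<bar>Jop Q H v 0 t x\<bar>)
        \<le> ennreal K1 * (\<integral>\<^sup>+s\<in>{0..t}. ennreal ((t - s) powr e)
            * Lp_norm (restrict_space lborel Q) \<rho> (\<lambda>y. ennreal \<bar>v s y\<bar>) \<partial>lborel)"
      using space_bound v t by simp
    also have "\<dots> \<le> ennreal K1 * (ennreal K2 * Lp_norm (restrict_space lborel {0..T}) lam
        (\<lambda>s. Lp_norm (restrict_space lborel Q) \<rho> (\<lambda>y. ennreal \<bar>v s y\<bar>)))"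
      using Q v t by (intro mult_left_mono time_bound borel_measurable_Lp_norm_abs_section) auto
    finally show ?thesis
      using \<open>0 < K1\<close> \<open>0 < K2\<close> by (simp add: ennreal_mult mult.assoc)
  qed
  then show ?thesis
    using \<open>0 < K1\<close> \<open>0 < K2\<close> by (intro exI[of _ "K1 * K2"] conjI allI impI Lp_norm_top_le AE_I2) auto
qed

theorem lemma3p1:
  fixes Q :: "'a::euclidean_space set"
    and H :: "real \<Rightarrow> 'a \<Rightarrow> real \<Rightarrow> 'a \<Rightarrow> real"
    and T \<alpha> \<beta> \<gamma> c C :: real
    and \<rho> q :: ennreal
  assumes "compact Q"
    and "T > 0"
    and "\<beta> \<ge> 1" and "\<alpha> > 0" and "\<gamma> > 0" and "c > 0" and "C > 0"
    and H_meas: "(\<lambda>((t, x), (s, y)). H t x s y) \<in> borel_measurable borel"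
    and H_bound: "\<And>s t x y. 0 \<le> s \<Longrightarrow> s < t \<Longrightarrow> t \<le> T \<Longrightarrow> x \<in> Q \<Longrightarrow> y \<in> Q \<Longrightarrow>
          \<bar>H t x s y\<bar> \<le> C * (t - s) powr (- \<alpha>) * exp (- c * norm (x - y) powr \<beta> / (t - s) powr \<gamma>)"
    and "1 \<le> \<rho>" and "\<rho> \<le> q"
  defines "rinv \<equiv> recip q - recip \<rho> + 1"
  shows
    "(\<exists>K>0. \<forall>v :: real \<Rightarrow> 'a \<Rightarrow> real. (\<lambda>(s, y). v s y) \<in> borel_measurable borel \<longrightarrow>
        (\<forall>t0 t. 0 \<le> t0 \<and> t0 \<le> t \<and> t \<le> T \<longrightarrow>
          Lp_norm (restrict_space lborel Q) q (\<lambda>x. ennreal \<bar>Jop Q H v t0 t x\<bar>)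
          \<le> ennreal K * (\<integral>\<^sup>+ s \<in> {t0..t}.
                ennreal ((t - s) powr (- \<alpha> + \<gamma> * real DIM('a) * rinv / \<beta>))
                * Lp_norm (restrict_space lborel Q) \<rho> (\<lambda>y. ennreal \<bar>v s y\<bar>) \<partial>lborel)))
     \<and> (\<forall>lam::ennreal. 1 \<le> lam \<longrightarrow> \<alpha> + recip lam < \<gamma> * real DIM('a) * rinv / \<beta> + 1 \<longrightarrow>
        (\<exists>K>0. \<forall>v :: real \<Rightarrow> 'a \<Rightarrow> real. (\<lambda>(s, y). v s y) \<in> borel_measurable borel \<longrightarrow>
          Lp_norm (restrict_space lborel {0..T}) \<infinity>
              (\<lambda>t. Lp_norm (restrict_space lborel Q) q (\<lambda>x. ennreal \<bar>Jop Q H v 0 t x\<bar>))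
          \<le> ennreal K * Lp_norm (restrict_space lborel {0..T}) lam
              (\<lambda>s. Lp_norm (restrict_space lborel Q) \<rho> (\<lambda>y. ennreal \<bar>v s y\<bar>))))"
proof -
  have Q: "Q \<in> sets borel"
    using \<open>compact Q\<close> by (simp add: compact_imp_closed borel_closed)
  show ?thesis
    unfolding rinv_def infinity_ennreal_def
    by (intro conjI allI impI Lp_norm_Jop_le[OF Q assms(7,6,3,5) _ assms(10,11)]
        Lp_norm_top_Jop_le[OF Q assms(7,6,3,5,2) _ assms(10,11)])
      (assumption | rule H_bound)+
qed

end
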